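(* Let $k\geq 3$ be an integer, $\sigma=\begin{pmatrix}\frac13&0\\0&\frac23\end{pmatrix}$, and $D_1=\sigma\otimes\frac{I_3}{3}\otimes\frac{I_k}{k}\in M_{6k}$. There exists an extreme point of the convex set $\mathcal{CP}(M_{6k},M_{6k};D_1,D_1)$ with Choi rank $8k$.
   Context: $M_n$ denotes the complex $n\times n$ matrices. For positive semidefinite $A\in M_{d_1}$, $B\in M_{d_2}$, $\mathcal{CP}(M_{d_1},M_{d_2};A,B)$ is the convex set of completely positive maps $\Phi:M_{d_1}\to M_{d_2}$ with $\Phi(I_{d_1})=B$ and $\Phi^*(I_{d_2})=A$ ($\Phi^*$ the Hilbert–Schmidt adjoint); equivalently $\Phi(X)=\sum_iK_iXK_i^\dagger$ with $\sum_iK_i^\dagger K_i=A$, $\sum_iK_iK_i^\dagger=B$. An extreme point of a convex set $\mathcal{K}$ is an element not expressible as $t\Phi_1+(1-t)\Phi_2$ with $t\in(0,1)$ and distinct $\Phi_1,\Phi_2\in\mathcal{K}$. The Choi rank of $\Phi$ is the rank of $\sum_{r,s}E_{rs}\otimes\Phi(E_{rs})$. *)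

theory Defs
  imports "Jordan_Normal_Form.DL_Rank" "Jordan_Normal_Form.Schur_Decomposition"
begin

(* A map Phi : M_d1 -> M_d2 is a function complex mat => complex mat; to make it
   determined by its action on M_d1 we require it to vanish (be the zero d2 x d2 matrix)
   outside carrier_mat d1 d1 (canonical extension). *)

definition kron :: "complex mat \<Rightarrow> complex mat \<Rightarrow> complex mat" where
  "kron A B = mat (dim_row A * dim_row B) (dim_col A * dim_col B)
     (\<lambda>(i,j). A $$ (i div dim_row B, j div dim_col B) * B $$ (i mod dim_row B, j mod dim_col B))"

definition unit_mat :: "nat \<Rightarrow> nat \<Rightarrow> nat \<Rightarrow> complex mat" where
  "unit_mat n r s = mat n n (\<lambda>(i,j). if i = r \<and> j = s then 1 else 0)"

definition msum :: "nat \<Rightarrow> nat \<Rightarrow> ('a \<Rightarrow> complex mat) \<Rightarrow> 'a list \<Rightarrow> complex mat" where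
  "msum m n f xs = foldr (\<lambda>x acc. f x + acc) xs (0\<^sub>m m n)"

definition mtrace :: "complex mat \<Rightarrow> complex" where
  "mtrace A = (\<Sum>i<dim_row A. A $$ (i, i))"

definition completely_positive :: "nat \<Rightarrow> nat \<Rightarrow> (complex mat \<Rightarrow> complex mat) \<Rightarrow> bool" where
  "completely_positive d1 d2 \<Phi> \<longleftrightarrow>
     (\<exists>Ks. (\<forall>K \<in> set Ks. K \<in> carrier_mat d2 d1) \<and>
           (\<forall>X \<in> carrier_mat d1 d1. \<Phi> X = msum d2 d2 (\<lambda>K. K * X * mat_adjoint K) Ks))"

(* CP(M_d1, M_d2; A, B): Phi(I) = B and Phi^*(I) = A, where Phi^* is the
   Hilbert-Schmidt adjoint: <Phi^*(Y), X> = <Y, Phi(X)>, <P,Q> = tr(P^dagger Q);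
   with Y = I this reads tr(A^dagger X) = tr(Phi(X)) for all X in M_d1. *)
definition CP_set :: "nat \<Rightarrow> nat \<Rightarrow> complex mat \<Rightarrow> complex mat \<Rightarrow> (complex mat \<Rightarrow> complex mat) set" where
  "CP_set d1 d2 A B = {\<Phi>. completely_positive d1 d2 \<Phi> \<and>
      (\<forall>X. X \<notin> carrier_mat d1 d1 \<longrightarrow> \<Phi> X = 0\<^sub>m d2 d2) \<and>
      \<Phi> (1\<^sub>m d1) = B \<and>
      (\<forall>X \<in> carrier_mat d1 d1. mtrace (mat_adjoint A * X) = mtrace (\<Phi> X))}"

definition extreme_point_of :: "(complex mat \<Rightarrow> complex mat) \<Rightarrow> (complex mat \<Rightarrow> complex mat) set \<Rightarrow> bool" where
  "extreme_point_of \<Phi> K \<longleftrightarrow> \<Phi> \<in> K \<and>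
     \<not> (\<exists>t::real. \<exists>\<Phi>1 \<in> K. \<exists>\<Phi>2 \<in> K. 0 < t \<and> t < 1 \<and> \<Phi>1 \<noteq> \<Phi>2 \<and>
           \<Phi> = (\<lambda>X. complex_of_real t \<cdot>\<^sub>m \<Phi>1 X + complex_of_real (1 - t) \<cdot>\<^sub>m \<Phi>2 X))"

definition choi_matrix :: "nat \<Rightarrow> nat \<Rightarrow> (complex mat \<Rightarrow> complex mat) \<Rightarrow> complex mat" where
  "choi_matrix d1 d2 \<Phi> = msum (d1 * d2) (d1 * d2)
     (\<lambda>(r,s). kron (unit_mat d1 r s) (\<Phi> (unit_mat d1 r s))) (List.product [0..<d1] [0..<d1])"

definition choi_rank :: "nat \<Rightarrow> nat \<Rightarrow> (complex mat \<Rightarrow> complex mat) \<Rightarrow> nat" where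
  "choi_rank d1 d2 \<Phi> = vec_space.rank (d1 * d2) (choi_matrix d1 d2 \<Phi>)"

definition sigma_mat :: "complex mat" where
  "sigma_mat = mat 2 2 (\<lambda>(i,j). if i = 0 \<and> j = 0 then 1/3 else if i = 1 \<and> j = 1 then 2/3 else 0)"

definition D1_mat :: "nat \<Rightarrow> complex mat" where
  "D1_mat k = kron (kron sigma_mat ((1/3) \<cdot>\<^sub>m 1\<^sub>m 3)) ((1 / of_nat k) \<cdot>\<^sub>m 1\<^sub>m k)"

end

theory Submission
  imports Defs "Jordan_Normal_Form.DL_Rank_Submatrix"
begin

(* The extreme point is the Kraus map whose 8k Kraus operators are the tensor products
   B_p (x) C_c (x) L_t of three small families: 2 operators on C^2, 4 on C^3 and k on C^k,
   scaled so that sum K K^H = sum K^H K = D1.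

   Extremality is Choi's criterion adapted to CP(A, B). If Phi = t Phi1 + (1 - t) Phi2, the Choi
   matrix of Phi1 is dominated by that of Phi, so the Kraus operators of Phi1 lie in the span of
   the pairwise orthogonal K_i and Phi1 = sum G_ij K_i . K_j^H. The constraints Phi1(I) = B and
   Phi1^*(I) = A say that G - I annihilates the pairs (K_i K_j^H, K_j^H K_i); these pairs are
   linearly independent, so G = I and Phi1 = Phi. Independence of the pairs passes to a tensor
   product when one factor has it and the other factor has both the K_i K_j^H and the K_j^H K_i
   linearly independent; for the three small families it is checked by hand.

   The K_i have pairwise disjoint supports, so the Choi matrix is a sum of 8k outer products of
   nonzero vectors with disjoint supports and has rank exactly 8k. *)

subsection \<open>Adjoints and Kronecker products\<close>

lemma bij_betw_pair_index: "bij_betw (\<lambda>(a, b). a * m + b) ({..<n} \<times> {..<m}) {..<n * m :: nat}"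
proof (rule bij_betw_byWitness[where f' = "\<lambda>i. (i div m, i mod m)"])
  show "(\<lambda>(a, b). a * m + b) ` ({..<n} \<times> {..<m}) \<subseteq> {..<n * m}"
  proof clarsimp
    fix a b assume "a < n" "b < m"
    then have "a * m + b < (a + 1) * m" by simp
    also have "\<dots> \<le> n * m" using \<open>a < n\<close> by (intro mult_le_mono1) simp
    finally show "a * m + b < n * m" .
  qed
  show "(\<lambda>i. (i div m, i mod m)) ` {..<n * m} \<subseteq> {..<n} \<times> {..<m}"
  proof clarsimp
    fix i assume "i < n * m"
    moreover from this have "0 < m" by (cases m) auto
    ultimately show "i div m < n \<and> i mod m < m" by (simp add: less_mult_imp_div_less)
  qed
qed auto

lemma sum_lessThan_mult: "(\<Sum>i<n * (m :: nat). g i) = (\<Sum>a<n. \<Sum>b<m. g (a * m + b))"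
proof -
  have "(\<Sum>i<n * m. g i) = (\<Sum>(a, b)\<in>{..<n} \<times> {..<m}. g (a * m + b))"
    using sum.reindex_bij_betw[OF bij_betw_pair_index, where g = g] by (simp add: split_def)
  then show ?thesis by (simp add: sum.cartesian_product)
qed

lemma pair_index_less: "a < n \<Longrightarrow> b < m \<Longrightarrow> a * m + b < n * (m :: nat)"
  using bij_betw_apply[OF bij_betw_pair_index, of "(a, b)"] by auto

lemma lessThan_mult_cases:
  assumes "i < n * (m :: nat)"
  obtains a b where "a < n" "b < m" "i = a * m + b"
proof
  have "0 < m" using assms by (cases m) auto
  then show "i div m < n" "i mod m < m" using assms by (auto simp: less_mult_imp_div_less)
qed simp

lemma dim_mat_adjoint [simp]:
  "dim_row (mat_adjoint A) = dim_col A" "dim_col (mat_adjoint A) = dim_row A"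
  unfolding mat_adjoint_def by auto

lemma index_mat_adjoint [simp]:
  "i < dim_col A \<Longrightarrow> j < dim_row A \<Longrightarrow> mat_adjoint (A :: complex mat) $$ (i, j) = cnj (A $$ (j, i))"
  unfolding mat_adjoint_def by (auto simp: mat_of_rows_def conjugate_complex_def)

lemma mat_adjoint_carrier [simp]: "A \<in> carrier_mat n m \<Longrightarrow> mat_adjoint A \<in> carrier_mat m n"
  by (metis dim_mat_adjoint carrier_matD carrier_matI)

lemma index_mult_mat_sum:
  assumes "A \<in> carrier_mat n k" "B \<in> carrier_mat k m" "i < n" "j < m"
  shows "(A * B) $$ (i, j) = (\<Sum>l<k. A $$ (i, l) * B $$ (l, j))"
  using assms by (simp add: scalar_prod_def atLeast0LessThan)

lemma index_mult_mat_adjoint: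
  assumes "A \<in> carrier_mat n k" "B \<in> carrier_mat m k" "i < n" "j < m"
  shows "(A * mat_adjoint B) $$ (i, j) = (\<Sum>l<k. A $$ (i, l) * cnj (B $$ (j, l)))"
  using assms by (simp add: scalar_prod_def atLeast0LessThan)

lemma index_mat_adjoint_mult:
  assumes "A \<in> carrier_mat k n" "B \<in> carrier_mat k m" "i < m" "j < n"
  shows "(mat_adjoint B * A) $$ (i, j) = (\<Sum>l<k. cnj (B $$ (l, i)) * A $$ (l, j))"
  using assms by (simp add: scalar_prod_def atLeast0LessThan)

lemma index_sandwich:
  assumes "A \<in> carrier_mat n k" "X \<in> carrier_mat k l" "B \<in> carrier_mat m l" "i < n" "j < m"
  shows "(A * X * mat_adjoint B) $$ (i, j) = (\<Sum>a<k. \<Sum>b<l. A $$ (i, a) * X $$ (a, b) * cnj (B $$ (j, b)))"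
proof -
  have "(A * X * mat_adjoint B) $$ (i, j) = (\<Sum>b<l. (A * X) $$ (i, b) * cnj (B $$ (j, b)))"
    using assms by (intro index_mult_mat_adjoint) auto
  also have "\<dots> = (\<Sum>b<l. \<Sum>a<k. A $$ (i, a) * X $$ (a, b) * cnj (B $$ (j, b)))"
    using assms by (simp add: scalar_prod_def atLeast0LessThan sum_distrib_right)
  finally show ?thesis by (simp only: sum.swap[of _ "{..<l}" "{..<k}"])
qed

lemma dim_kron [simp]:
  "dim_row (kron A B) = dim_row A * dim_row B" "dim_col (kron A B) = dim_col A * dim_col B"
  unfolding kron_def by simp_all

lemma kron_carrier: "A \<in> carrier_mat n m \<Longrightarrow> B \<in> carrier_mat n' m' \<Longrightarrow> kron A B \<in> carrier_mat (n * n') (m * m')"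
  by (metis carrier_matD carrier_matI dim_kron)

lemma index_kron:
  assumes "A \<in> carrier_mat n m" "B \<in> carrier_mat n' m'" "a < n" "x < n'" "b < m" "y < m'"
  shows "kron A B $$ (a * n' + x, b * m' + y) = A $$ (a, b) * B $$ (x, y)"
  using assms pair_index_less[of a n x n'] pair_index_less[of b m y m'] by (simp add: kron_def)

lemma kron_mult:
  assumes A: "A \<in> carrier_mat n k" and C: "C \<in> carrier_mat k m"
    and B: "B \<in> carrier_mat n' k'" and D: "D \<in> carrier_mat k' m'"
  shows "kron A B * kron C D = kron (A * C) (B * D)"
proof (rule eq_matI)
  have AB: "kron A B \<in> carrier_mat (n * n') (k * k')" and CD: "kron C D \<in> carrier_mat (k * k') (m * m')"
    using A B C D by (simp_all add: kron_carrier)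
  fix i j assume "i < dim_row (kron (A * C) (B * D))" "j < dim_col (kron (A * C) (B * D))"
  then have "i < n * n'" "j < m * m'" using A C B D by auto
  then obtain a x b y where ax: "a < n" "x < n'" "i = a * n' + x" and bj: "b < m" "y < m'" "j = b * m' + y"
    by (metis lessThan_mult_cases)
  have "(kron A B * kron C D) $$ (i, j) = (\<Sum>l<k * k'. kron A B $$ (i, l) * kron C D $$ (l, j))"
    using \<open>i < n * n'\<close> \<open>j < m * m'\<close> by (rule index_mult_mat_sum[OF AB CD])
  also have "\<dots> = (\<Sum>c<k. \<Sum>z<k'. (A $$ (a, c) * C $$ (c, b)) * (B $$ (x, z) * D $$ (z, y)))"
    unfolding sum_lessThan_mult ax(3) bj(3)
    by (intro sum.cong refl) (simp add: index_kron[OF A B] index_kron[OF C D] ax bj mult_ac)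
  also have "\<dots> = (A * C) $$ (a, b) * (B * D) $$ (x, y)"
    by (simp add: index_mult_mat_sum[OF A C ax(1) bj(1)] index_mult_mat_sum[OF B D ax(2) bj(2)] sum_product)
  also have "\<dots> = kron (A * C) (B * D) $$ (i, j)"
    unfolding ax(3) bj(3) using A B C D ax bj by (intro index_kron[symmetric]) auto
  finally show "(kron A B * kron C D) $$ (i, j) = kron (A * C) (B * D) $$ (i, j)" .
qed (use A B C D in auto)

lemma mat_adjoint_kron: "mat_adjoint (kron A B) = kron (mat_adjoint A) (mat_adjoint B)"
proof (rule eq_matI)
  have A: "A \<in> carrier_mat (dim_row A) (dim_col A)" and B: "B \<in> carrier_mat (dim_row B) (dim_col B)"
    by auto
  fix i j assume "i < dim_row (kron (mat_adjoint A) (mat_adjoint B))" "j < dim_col (kron (mat_adjoint A) (mat_adjoint B))"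
  then have "i < dim_col A * dim_col B" "j < dim_row A * dim_row B" by auto
  then obtain a x b y where ax: "a < dim_col A" "x < dim_col B" "i = a * dim_col B + x"
    and bj: "b < dim_row A" "y < dim_row B" "j = b * dim_row B + y"
    by (metis lessThan_mult_cases)
  have "mat_adjoint (kron A B) $$ (i, j) = cnj (kron A B $$ (j, i))"
    using \<open>i < dim_col A * dim_col B\<close> \<open>j < dim_row A * dim_row B\<close> by simp
  also have "\<dots> = cnj (A $$ (b, a)) * cnj (B $$ (y, x))"
    unfolding ax(3) bj(3) index_kron[OF A B bj(1,2) ax(1,2)] by simp
  also have "\<dots> = kron (mat_adjoint A) (mat_adjoint B) $$ (i, j)"
    unfolding ax(3) bj(3) using ax bj by (subst index_kron[where n = "dim_col A" and m = "dim_row A"]) auto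
  finally show "mat_adjoint (kron A B) $$ (i, j) = kron (mat_adjoint A) (mat_adjoint B) $$ (i, j)" .
qed auto

lemma dim_msum [simp]: "dim_row (msum m n f xs) = m" "dim_col (msum m n f xs) = n"
  by (induction xs) (simp_all add: msum_def)

lemma index_msum:
  assumes "i < m" "j < n"
  shows "msum m n f xs $$ (i, j) = (\<Sum>x\<leftarrow>xs. f x $$ (i, j))"
  using assms
proof (induction xs)
  case (Cons x xs)
  then show ?case using dim_msum[of m n f xs] by (simp add: msum_def)
qed (simp add: msum_def)

definition kraus_map :: "nat \<Rightarrow> nat \<Rightarrow> (nat \<Rightarrow> complex mat) \<Rightarrow> complex mat \<Rightarrow> complex mat" where
  "kraus_map d r K X =
     (if X \<in> carrier_mat d d then msum d d (\<lambda>M. M * X * mat_adjoint M) (map K [0..<r]) else 0\<^sub>m d d)"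

lemma dim_kraus_map [simp]: "dim_row (kraus_map d r K X) = d" "dim_col (kraus_map d r K X) = d"
  unfolding kraus_map_def by simp_all

lemma kraus_map_carrier [simp]: "kraus_map d r K X \<in> carrier_mat d d"
  by (simp add: carrier_matI)

lemma index_kraus_map:
  assumes "X \<in> carrier_mat d d" "p < d" "q < d"
  shows "kraus_map d r K X $$ (p, q) = (\<Sum>n<r. (K n * X * mat_adjoint (K n)) $$ (p, q))"
  unfolding kraus_map_def using assms by (simp add: index_msum sum_list_sum_nth atLeast0LessThan)

lemma unit_mat_carrier [simp]: "unit_mat d a b \<in> carrier_mat d d"
  unfolding unit_mat_def by simp

lemma sandwich_unit_mat:
  assumes "K \<in> carrier_mat n d" "L \<in> carrier_mat m d" "a < d" "b < d" "p < n" "q < m"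
  shows "(K * unit_mat d a b * mat_adjoint L) $$ (p, q) = K $$ (p, a) * cnj (L $$ (q, b))"
proof -
  have row: "(\<Sum>b'<d. K $$ (p, a') * unit_mat d a b $$ (a', b') * cnj (L $$ (q, b'))) =
      (if a' = a then K $$ (p, a) * cnj (L $$ (q, b)) else 0)" if "a' < d" for a'
  proof -
    have "(\<Sum>b'<d. K $$ (p, a') * unit_mat d a b $$ (a', b') * cnj (L $$ (q, b'))) =
        (\<Sum>b'<d. if b' = b then (if a' = a then K $$ (p, a) * cnj (L $$ (q, b)) else 0) else 0)"
      using that by (intro sum.cong) (auto simp: unit_mat_def)
    then show ?thesis using assms(4) by simp
  qed
  have "(K * unit_mat d a b * mat_adjoint L) $$ (p, q) =
      (\<Sum>a'<d. \<Sum>b'<d. K $$ (p, a') * unit_mat d a b $$ (a', b') * cnj (L $$ (q, b')))"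
    using assms by (intro index_sandwich) auto
  also have "\<dots> = (\<Sum>a'<d. if a' = a then K $$ (p, a) * cnj (L $$ (q, b)) else 0)"
    using row by simp
  also have "\<dots> = K $$ (p, a) * cnj (L $$ (q, b))"
    using assms(3) by simp
  finally show ?thesis .
qed

lemma index_kraus_map_unit_mat:
  assumes K: "\<forall>n<r. K n \<in> carrier_mat d d" and "a < d" "b < d" "p < d" "q < d"
  shows "kraus_map d r K (unit_mat d a b) $$ (p, q) = (\<Sum>n<r. K n $$ (p, a) * cnj (K n $$ (q, b)))"
  unfolding index_kraus_map[OF unit_mat_carrier assms(4,5)]
  using assms by (intro sum.cong refl sandwich_unit_mat) auto

lemma CP_set_kraus_map:
  assumes "\<Psi> \<in> CP_set d d A B"
  obtains r N where "\<forall>n<r. N n \<in> carrier_mat d d" "\<Psi> = kraus_map d r N"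
proof -
  from assms obtain Ks where Ks: "\<forall>K \<in> set Ks. K \<in> carrier_mat d d"
    "\<forall>X \<in> carrier_mat d d. \<Psi> X = msum d d (\<lambda>K. K * X * mat_adjoint K) Ks"
    and zero: "\<forall>X. X \<notin> carrier_mat d d \<longrightarrow> \<Psi> X = 0\<^sub>m d d"
    unfolding CP_set_def completely_positive_def by auto
  have "\<Psi> = kraus_map d (length Ks) (\<lambda>n. Ks ! n)"
    using Ks(2) zero by (auto simp: kraus_map_def map_nth)
  moreover have "\<forall>n<length Ks. Ks ! n \<in> carrier_mat d d" using Ks(1) by auto
  ultimately show ?thesis using that by blast
qed

definition prods_adj :: "(nat \<Rightarrow> complex mat) \<Rightarrow> nat \<times> nat \<Rightarrow> complex mat" where
  "prods_adj K = (\<lambda>(i, j). K i * mat_adjoint (K j))"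

definition adj_prods :: "(nat \<Rightarrow> complex mat) \<Rightarrow> nat \<times> nat \<Rightarrow> complex mat" where
  "adj_prods K = (\<lambda>(i, j). mat_adjoint (K j) * K i)"

definition sum_prods_adj :: "nat \<Rightarrow> nat \<Rightarrow> (nat \<Rightarrow> complex mat) \<Rightarrow> complex mat" where
  "sum_prods_adj d r K = mat d d (\<lambda>pq. \<Sum>n<r. prods_adj K (n, n) $$ pq)"

definition sum_adj_prods :: "nat \<Rightarrow> nat \<Rightarrow> (nat \<Rightarrow> complex mat) \<Rightarrow> complex mat" where
  "sum_adj_prods d r K = mat d d (\<lambda>pq. \<Sum>n<r. adj_prods K (n, n) $$ pq)"

lemma kraus_map_one:
  assumes K: "\<forall>n<r. K n \<in> carrier_mat d d"
  shows "kraus_map d r K (1\<^sub>m d) = sum_prods_adj d r K"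
proof (rule eq_matI)
  fix p q assume "p < dim_row (sum_prods_adj d r K)" "q < dim_col (sum_prods_adj d r K)"
  then have pq: "p < d" "q < d" by (simp_all add: sum_prods_adj_def)
  have "kraus_map d r K (1\<^sub>m d) $$ (p, q) = (\<Sum>n<r. (K n * 1\<^sub>m d * mat_adjoint (K n)) $$ (p, q))"
    using K pq by (simp add: index_kraus_map)
  also have "\<dots> = sum_prods_adj d r K $$ (p, q)"
    using K pq by (auto simp: sum_prods_adj_def prods_adj_def intro!: sum.cong)
  finally show "kraus_map d r K (1\<^sub>m d) $$ (p, q) = sum_prods_adj d r K $$ (p, q)" .
qed (use kraus_map_carrier in \<open>auto simp: sum_prods_adj_def\<close>)

lemma sum_swap3:
  "(\<Sum>b\<in>B. \<Sum>i\<in>I. \<Sum>j\<in>J. g b i j) = (\<Sum>i\<in>I. \<Sum>j\<in>J. \<Sum>b\<in>B. g b i j)"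
proof -
  have "(\<Sum>b\<in>B. \<Sum>i\<in>I. \<Sum>j\<in>J. g b i j) = (\<Sum>i\<in>I. \<Sum>b\<in>B. \<Sum>j\<in>J. g b i j)"
    by (rule sum.swap)
  also have "\<dots> = (\<Sum>i\<in>I. \<Sum>j\<in>J. \<Sum>b\<in>B. g b i j)"
    by (intro sum.cong refl sum.swap)
  finally show ?thesis .
qed

lemma sum_swap_inner_pairs:
  "(\<Sum>a\<in>A. \<Sum>b\<in>B. \<Sum>i\<in>I. \<Sum>j\<in>J. f a b i j) = (\<Sum>i\<in>I. \<Sum>j\<in>J. \<Sum>a\<in>A. \<Sum>b\<in>B. f a b i j)"
proof -
  have "(\<Sum>a\<in>A. \<Sum>b\<in>B. \<Sum>i\<in>I. \<Sum>j\<in>J. f a b i j) = (\<Sum>a\<in>A. \<Sum>i\<in>I. \<Sum>j\<in>J. \<Sum>b\<in>B. f a b i j)"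
    by (intro sum.cong refl sum_swap3)
  also have "\<dots> = (\<Sum>i\<in>I. \<Sum>j\<in>J. \<Sum>a\<in>A. \<Sum>b\<in>B. f a b i j)"
    by (rule sum_swap3)
  finally show ?thesis .
qed

lemma mtrace_kraus_map:
  assumes K: "\<forall>n<r. K n \<in> carrier_mat d d" and X: "X \<in> carrier_mat d d"
  shows "mtrace (kraus_map d r K X) = mtrace (sum_adj_prods d r K * X)"
proof -
  define g where "g p n a b = K n $$ (p, a) * X $$ (a, b) * cnj (K n $$ (p, b))" for p n a b
  have S: "sum_adj_prods d r K \<in> carrier_mat d d"
    by (simp add: sum_adj_prods_def)
  have S_index: "sum_adj_prods d r K $$ (b, a) = (\<Sum>n<r. \<Sum>p<d. cnj (K n $$ (p, b)) * K n $$ (p, a))"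
    if "a < d" "b < d" for a b
    using K that by (auto simp: sum_adj_prods_def adj_prods_def intro!: sum.cong index_mat_adjoint_mult)
  have "mtrace (kraus_map d r K X) = (\<Sum>p<d. \<Sum>n<r. \<Sum>a<d. \<Sum>b<d. g p n a b)"
    using kraus_map_carrier[of d r K X] K X
    by (auto simp: mtrace_def index_kraus_map g_def intro!: sum.cong index_sandwich)
  also have "\<dots> = (\<Sum>a<d. \<Sum>b<d. \<Sum>p<d. \<Sum>n<r. g p n a b)"
    by (rule sum_swap_inner_pairs)
  also have "\<dots> = (\<Sum>b<d. \<Sum>a<d. \<Sum>p<d. \<Sum>n<r. g p n a b)"
    by (rule sum.swap)
  also have "\<dots> = (\<Sum>b<d. \<Sum>a<d. \<Sum>n<r. \<Sum>p<d. g p n a b)"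
    by (intro sum.cong refl sum.swap)
  also have "\<dots> = (\<Sum>b<d. \<Sum>a<d. sum_adj_prods d r K $$ (b, a) * X $$ (a, b))"
    by (intro sum.cong refl) (simp add: S_index g_def sum_distrib_left sum_distrib_right mult_ac)
  also have "\<dots> = (\<Sum>b<d. (sum_adj_prods d r K * X) $$ (b, b))"
    using S X by (intro sum.cong refl) (subst index_mult_mat_sum[OF S X], auto)
  also have "\<dots> = mtrace (sum_adj_prods d r K * X)"
    using S X by (simp add: mtrace_def)
  finally show ?thesis .
qed

lemma kraus_map_in_CP_set:
  assumes K: "\<forall>n<r. K n \<in> carrier_mat d d"
    and "sum_prods_adj d r K = B" and "sum_adj_prods d r K = mat_adjoint A"
  shows "kraus_map d r K \<in> CP_set d d A B"
  unfolding CP_set_def completely_positive_def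
proof (intro CollectI conjI ballI allI impI)
  show "\<exists>Ks. (\<forall>M\<in>set Ks. M \<in> carrier_mat d d) \<and>
      (\<forall>X\<in>carrier_mat d d. kraus_map d r K X = msum d d (\<lambda>M. M * X * mat_adjoint M) Ks)"
    using K by (intro exI[of _ "map K [0..<r]"]) (auto simp: kraus_map_def)
  show "kraus_map d r K (1\<^sub>m d) = B" using kraus_map_one[OF K] assms(2) by simp
  show "mtrace (mat_adjoint A * X) = mtrace (kraus_map d r K X)" if "X \<in> carrier_mat d d" for X
    using mtrace_kraus_map[OF K that] assms(3) by simp
qed (simp add: kraus_map_def)

subsection \<open>Choi rank of a Kraus map\<close>

lemma dim_choi_matrix [simp]:
  "dim_row (choi_matrix d1 d2 \<Phi>) = d1 * d2" "dim_col (choi_matrix d1 d2 \<Phi>) = d1 * d2"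
  by (simp_all add: choi_matrix_def)

lemma index_choi_matrix_kraus_map:
  assumes K: "\<forall>n<r. K n \<in> carrier_mat d d" and ij: "i < d * d" "j < d * d"
  shows "choi_matrix d d (kraus_map d r K) $$ (i, j) =
    (\<Sum>n<r. K n $$ (i mod d, i div d) * cnj (K n $$ (j mod d, j div d)))"
proof -
  obtain a x b y where ax: "a < d" "x < d" "i = a * d + x" and bj: "b < d" "y < d" "j = b * d + y"
    using ij by (metis lessThan_mult_cases)
  define f where "f = (\<lambda>(a', b'). kron (unit_mat d a' b') (kraus_map d r K (unit_mat d a' b')))"
  have f_index: "f (a', b') $$ (i, j) = (if a' = a \<and> b' = b then kraus_map d r K (unit_mat d a b) $$ (x, y) else 0)"
    if "a' < d" "b' < d" for a' b'
    unfolding f_def ax(3) bj(3) using kraus_map_carrier ax bj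
    by (simp add: index_kron[OF unit_mat_carrier]) (simp add: unit_mat_def)
  have "choi_matrix d d (kraus_map d r K) $$ (i, j) = (\<Sum>z\<leftarrow>List.product [0..<d] [0..<d]. f z $$ (i, j))"
    unfolding choi_matrix_def f_def[symmetric] using ij by (simp add: index_msum)
  also have "\<dots> = (\<Sum>z\<in>{..<d} \<times> {..<d}. f z $$ (i, j))"
    by (simp add: sum_list_distinct_conv_sum_set distinct_product atLeast0LessThan)
  also have "\<dots> = (\<Sum>z\<in>{..<d} \<times> {..<d}. if z = (a, b) then kraus_map d r K (unit_mat d a b) $$ (x, y) else 0)"
    by (rule sum.cong[OF refl]) (clarsimp simp: f_index)
  also have "\<dots> = kraus_map d r K (unit_mat d a b) $$ (x, y)"
    using ax bj by (simp add: sum.delta')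
  also have "\<dots> = (\<Sum>n<r. K n $$ (i mod d, i div d) * cnj (K n $$ (j mod d, j div d)))"
    using ax bj by (simp add: index_kraus_map_unit_mat[OF K])
  finally show ?thesis .
qed

lemma choi_rank_kraus_map_le:
  assumes K: "\<forall>n<r. K n \<in> carrier_mat d d"
  shows "choi_rank d d (kraus_map d r K) \<le> r"
proof -
  define v where "v n i = K n $$ (i mod d, i div d)" for n i
  define S where "S m = mat (d * d) (d * d) (\<lambda>(i, j). \<Sum>n<m. v n i * cnj (v n j))" for m
  have S_carrier: "S m \<in> carrier_mat (d * d) (d * d)" for m
    by (simp add: S_def)
  have "vec_space.rank (d * d) (S m) \<le> m" for m
  proof (induction m)
    case 0
    have "S 0 = 0\<^sub>m (d * d) (d * d)" by (rule eq_matI) (simp_all add: S_def)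
    then show ?case using vec_space.rank_0I by simp
  next
    case (Suc m)
    define T where "T = mat (d * d) (d * d) (\<lambda>(i, j). v m i * cnj (v m j))"
    have T: "T \<in> carrier_mat (d * d) (d * d)" by (simp add: T_def)
    have "S (Suc m) = S m + T" by (rule eq_matI) (simp_all add: S_def T_def)
    moreover have "vec_space.rank (d * d) T \<le> 1"
      by (rule vec_space.rank_le_1_product_entries[OF T, of "v m" "\<lambda>j. cnj (v m j)"]) (simp add: T_def)
    ultimately show ?case
      using vec_space.rank_subadditive[OF S_carrier T, of m] Suc.IH by simp
  qed
  moreover have "choi_matrix d d (kraus_map d r K) = S r"
    by (rule eq_matI) (simp_all add: S_def v_def index_choi_matrix_kraus_map[OF K])
  ultimately show ?thesis by (simp add: choi_rank_def)
qed

lemma rank_ge_diagonal_submatrix: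
  fixes C :: "'a :: field mat"
  assumes C: "C \<in> carrier_mat n n" and j: "inj_on j {..<r}" "j ` {..<r} \<subseteq> {..<n}"
    and off_diag: "\<And>a b. a < r \<Longrightarrow> b < r \<Longrightarrow> a \<noteq> b \<Longrightarrow> C $$ (j a, j b) = 0"
    and diag: "\<And>a. a < r \<Longrightarrow> C $$ (j a, j a) \<noteq> 0"
  shows "r \<le> vec_space.rank n C"
proof -
  define J where "J = j ` {..<r}"
  have card_J: "card J = r" using card_image[OF j(1)] by (simp add: J_def)
  have J_less: "{i. i < n \<and> i \<in> J} = J" using j(2) by (auto simp: J_def)
  have dim_C: "dim_row C = n" "dim_col C = n" using C by auto
  define M where "M = submatrix C J J"
  have M: "M \<in> carrier_mat r r"
    by (rule carrier_matI) (simp_all only: M_def dim_submatrix dim_C J_less card_J)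
  have pick_J: "\<exists>c<r. pick J a = j c" if "a < r" for a
    using pick_in_set_le[of a J] that card_J by (auto simp: J_def)
  have M_index: "M $$ (a, b) = C $$ (pick J a, pick J b)" if "a < r" "b < r" for a b
    unfolding M_def using that by (intro submatrix_index) (simp_all only: dim_C J_less card_J)
  have upper: "upper_triangular M"
  proof (rule upper_triangularI)
    fix a b assume "b < a" "a < dim_row M"
    then have ab: "a < r" "b < r" "b < a" using M by auto
    obtain ca cb where "ca < r" "cb < r" "pick J a = j ca" "pick J b = j cb"
      using pick_J ab by blast
    moreover have "pick J b < pick J a" using pick_mono_le[of a J b] ab card_J by simp
    ultimately show "M $$ (a, b) = 0" using M_index[OF ab(1,2)] off_diag by auto
  qed
  have diag_nonzero: "0 \<notin> set (diag_mat M)"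
  proof
    assume "0 \<in> set (diag_mat M)"
    then obtain a where "a < r" "M $$ (a, a) = 0" using M by (auto simp: diag_mat_def)
    moreover obtain c where "c < r" "pick J a = j c" using pick_J \<open>a < r\<close> by blast
    ultimately show False using M_index diag by auto
  qed
  have "det M \<noteq> 0"
    unfolding det_upper_triangular[OF upper M] using diag_nonzero by (simp add: prod_list_zero_iff)
  then show ?thesis
    using vec_space.rank_gt_minor[OF C, of J J] unfolding M_def J_less card_J by simp
qed

definition disjoint_supports :: "nat \<Rightarrow> nat \<Rightarrow> (nat \<Rightarrow> complex mat) \<Rightarrow> bool" where
  "disjoint_supports d r K \<longleftrightarrow>
     (\<forall>i<r. \<forall>j<r. i \<noteq> j \<longrightarrow> (\<forall>p<d. \<forall>q<d. K i $$ (p, q) = 0 \<or> K j $$ (p, q) = 0))"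

lemma nonzero_mat_entry:
  assumes "A \<in> carrier_mat n m" "A \<noteq> 0\<^sub>m n m"
  obtains i j where "i < n" "j < m" "A $$ (i, j) \<noteq> 0"
  using assms by (metis eq_matI index_zero_mat(1) carrier_matD zero_carrier_mat)

lemma rank_ge_sum_disjoint_outer_products:
  fixes C :: "complex mat" and v :: "nat \<Rightarrow> nat \<Rightarrow> complex"
  assumes C: "C \<in> carrier_mat m m"
    and C_index: "\<And>i i'. i < m \<Longrightarrow> i' < m \<Longrightarrow> C $$ (i, i') = (\<Sum>n<r. v n i * cnj (v n i'))"
    and v_disj: "\<And>n n' i. n < r \<Longrightarrow> n' < r \<Longrightarrow> n \<noteq> n' \<Longrightarrow> i < m \<Longrightarrow> v n i = 0 \<or> v n' i = 0"
    and nonzero: "\<And>n. n < r \<Longrightarrow> \<exists>i<m. v n i \<noteq> 0"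
  shows "r \<le> vec_space.rank m C"
proof -
  obtain j where j: "\<And>n. n < r \<Longrightarrow> j n < m \<and> v n (j n) \<noteq> 0"
    using nonzero by metis
  have off_diag_term: "v n (j a) * cnj (v n (j b)) = 0" if "n < r" "a < r" "b < r" "a \<noteq> b" for n a b
  proof (cases "n = a")
    case True
    then show ?thesis using v_disj[of b n "j b"] j[of b] that by auto
  next
    case False
    then show ?thesis using v_disj[of a n "j a"] j[of a] that by auto
  qed
  have off_diag: "C $$ (j a, j b) = 0" if "a < r" "b < r" "a \<noteq> b" for a b
  proof -
    have "C $$ (j a, j b) = (\<Sum>n<r. v n (j a) * cnj (v n (j b)))" using that j by (simp add: C_index)
    also have "\<dots> = 0" by (intro sum.neutral ballI off_diag_term) (use that in auto)
    finally show ?thesis .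
  qed
  have diag: "C $$ (j a, j a) \<noteq> 0" if a: "a < r" for a
  proof -
    have "C $$ (j a, j a) = (\<Sum>n<r. v n (j a) * cnj (v n (j a)))" using a j by (simp add: C_index)
    also have "\<dots> = (\<Sum>n<r. if n = a then v a (j a) * cnj (v a (j a)) else 0)"
      using a j v_disj[of _ a "j a"] by (intro sum.cong refl) auto
    finally show ?thesis using a j by simp
  qed
  have inj: "inj_on j {..<r}"
  proof (rule inj_onI, rule ccontr)
    fix a b assume "a \<in> {..<r}" "b \<in> {..<r}" "j a = j b" "a \<noteq> b"
    then show False using v_disj[of a b "j a"] j[of a] j[of b] by auto
  qed
  show ?thesis
    by (rule rank_ge_diagonal_submatrix[OF C inj]) (use j off_diag diag in auto)
qed

lemma choi_rank_kraus_map_ge: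
  assumes K: "\<forall>n<r. K n \<in> carrier_mat d d" and disj: "disjoint_supports d r K"
    and nonzero: "\<forall>n<r. K n \<noteq> 0\<^sub>m d d"
  shows "r \<le> choi_rank d d (kraus_map d r K)"
  unfolding choi_rank_def
proof (rule rank_ge_sum_disjoint_outer_products[where v = "\<lambda>n i. K n $$ (i mod d, i div d)"])
  show "choi_matrix d d (kraus_map d r K) \<in> carrier_mat (d * d) (d * d)"
    by (simp add: carrier_matI)
  show "choi_matrix d d (kraus_map d r K) $$ (i, i') =
      (\<Sum>n<r. K n $$ (i mod d, i div d) * cnj (K n $$ (i' mod d, i' div d)))" if "i < d * d" "i' < d * d" for i i'
    using index_choi_matrix_kraus_map[OF K that] .
  show "K n $$ (i mod d, i div d) = 0 \<or> K n' $$ (i mod d, i div d) = 0"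
    if nn': "n < r" "n' < r" "n \<noteq> n'" and i: "i < d * d" for n n' i
  proof -
    obtain a x where "a < d" "x < d" "i = a * d + x" using lessThan_mult_cases[OF i] by blast
    then show ?thesis using disj nn' unfolding disjoint_supports_def by simp
  qed
  show "\<exists>i<d * d. K n $$ (i mod d, i div d) \<noteq> 0" if n: "n < r" for n
  proof -
    obtain p q where "p < d" "q < d" "K n $$ (p, q) \<noteq> 0"
      using nonzero_mat_entry K nonzero n by meson
    then show ?thesis by (intro exI[of _ "q * d + p"]) (simp add: pair_index_less)
  qed
qed

lemma choi_rank_kraus_map:
  assumes "\<forall>n<r. K n \<in> carrier_mat d d" "disjoint_supports d r K" "\<forall>n<r. K n \<noteq> 0\<^sub>m d d"
  shows "choi_rank d d (kraus_map d r K) = r"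
  using choi_rank_kraus_map_le[OF assms(1)] choi_rank_kraus_map_ge[OF assms] by simp

subsection \<open>Extreme points of \<open>CP_set\<close>\<close>

definition lin_indep_mat_pairs :: "nat \<Rightarrow> 'a set \<Rightarrow> ('a \<Rightarrow> complex mat) \<Rightarrow> ('a \<Rightarrow> complex mat) \<Rightarrow> bool" where
  "lin_indep_mat_pairs d I F G \<longleftrightarrow>
     (\<forall>c. (\<forall>p<d. \<forall>q<d. (\<Sum>x\<in>I. c x * F x $$ (p, q)) = 0) \<and> (\<forall>p<d. \<forall>q<d. (\<Sum>x\<in>I. c x * G x $$ (p, q)) = 0)
        \<longrightarrow> (\<forall>x\<in>I. c x = 0))"

definition hs_inner :: "nat \<Rightarrow> complex mat \<Rightarrow> complex mat \<Rightarrow> complex" where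
  "hs_inner d A B = (\<Sum>x\<in>{..<d} \<times> {..<d}. cnj (A $$ x) * B $$ x)"

lemma hs_inner_commute: "hs_inner d B A = cnj (hs_inner d A B)"
  unfolding hs_inner_def by (simp add: mult.commute)

lemma hs_inner_self: "hs_inner d A A = of_real (\<Sum>x\<in>{..<d} \<times> {..<d}. (cmod (A $$ x))\<^sup>2)"
  unfolding hs_inner_def of_real_sum by (intro sum.cong refl) (metis complex_norm_square mult.commute)

lemma hs_inner_self_eq_0:
  assumes "hs_inner d A A = 0" "x \<in> {..<d} \<times> {..<d}"
  shows "A $$ x = 0"
proof -
  have "(\<Sum>x\<in>{..<d} \<times> {..<d}. (cmod (A $$ x))\<^sup>2) = 0"
    using assms(1) unfolding hs_inner_self by (metis of_real_eq_0_iff)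
  then show ?thesis using assms(2) by (cases x) (simp add: sum_nonneg_eq_0_iff)
qed

lemma hs_inner_lincomb:
  assumes "\<forall>x\<in>{..<d} \<times> {..<d}. B $$ x = N $$ x - (\<Sum>i<r. c i * K i $$ x)"
  shows "hs_inner d A B = hs_inner d A N - (\<Sum>i<r. c i * hs_inner d A (K i))"
proof -
  have "hs_inner d A B = (\<Sum>x\<in>{..<d} \<times> {..<d}. cnj (A $$ x) * N $$ x - (\<Sum>i<r. c i * (cnj (A $$ x) * K i $$ x)))"
    unfolding hs_inner_def
  proof (intro sum.cong refl)
    fix x assume "x \<in> {..<d} \<times> {..<d}"
    then have B: "B $$ x = N $$ x - (\<Sum>i<r. c i * K i $$ x)" using assms by blast
    show "cnj (A $$ x) * B $$ x = cnj (A $$ x) * N $$ x - (\<Sum>i<r. c i * (cnj (A $$ x) * K i $$ x))"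
      unfolding B by (simp add: right_diff_distrib sum_distrib_left mult_ac)
  qed
  also have "\<dots> = hs_inner d A N - (\<Sum>i<r. \<Sum>x\<in>{..<d} \<times> {..<d}. c i * (cnj (A $$ x) * K i $$ x))"
    unfolding hs_inner_def by (simp add: sum_subtractf sum.swap[of _ "{..<r}"])
  also have "\<dots> = hs_inner d A N - (\<Sum>i<r. c i * hs_inner d A (K i))"
    unfolding hs_inner_def by (simp add: sum_distrib_left)
  finally show ?thesis .
qed

lemma hs_inner_disjoint_supports:
  "disjoint_supports d r K \<Longrightarrow> \<forall>i<r. \<forall>j<r. i \<noteq> j \<longrightarrow> hs_inner d (K i) (K j) = 0"
  unfolding disjoint_supports_def hs_inner_def by (auto intro!: sum.neutral)

lemma hs_inner_self_nonzero:
  assumes "K \<in> carrier_mat d d" "K \<noteq> 0\<^sub>m d d"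
  shows "hs_inner d K K \<noteq> 0"
  using assms hs_inner_self_eq_0[of d K] by auto

(* The Choi matrix of kraus_map d r K, with rows and columns indexed by matrix positions. *)
definition choi_kernel :: "nat \<Rightarrow> (nat \<Rightarrow> complex mat) \<Rightarrow> nat \<times> nat \<Rightarrow> nat \<times> nat \<Rightarrow> complex" where
  "choi_kernel r K x y = (\<Sum>n<r. K n $$ x * cnj (K n $$ y))"

lemma choi_kernel_quadratic_form:
  "(\<Sum>x\<in>{..<d} \<times> {..<d}. \<Sum>y\<in>{..<d} \<times> {..<d}. cnj (R $$ x) * R $$ y * choi_kernel r K x y) =
    of_real (\<Sum>n<r. (cmod (hs_inner d R (K n)))\<^sup>2)"
proof -
  let ?S = "{..<d} \<times> {..<d}"
  have "(\<Sum>x\<in>?S. \<Sum>y\<in>?S. cnj (R $$ x) * R $$ y * choi_kernel r K x y) =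
      (\<Sum>x\<in>?S. \<Sum>y\<in>?S. \<Sum>n<r. (cnj (R $$ x) * K n $$ x) * cnj (cnj (R $$ y) * K n $$ y))"
    unfolding choi_kernel_def by (simp add: sum_distrib_left mult_ac)
  also have "\<dots> = (\<Sum>n<r. \<Sum>x\<in>?S. \<Sum>y\<in>?S. (cnj (R $$ x) * K n $$ x) * cnj (cnj (R $$ y) * K n $$ y))"
    by (rule sum_swap3[symmetric])
  also have "\<dots> = (\<Sum>n<r. hs_inner d R (K n) * cnj (hs_inner d R (K n)))"
    unfolding hs_inner_def by (simp add: sum_product cnj_sum)
  also have "\<dots> = of_real (\<Sum>n<r. (cmod (hs_inner d R (K n)))\<^sup>2)"
    unfolding of_real_sum by (intro sum.cong refl) (metis complex_norm_square)
  finally show ?thesis .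
qed

lemma choi_kernel_convex:
  fixes t :: real
  assumes K: "\<forall>n<r. K n \<in> carrier_mat d d" and N: "\<forall>n<r1. N n \<in> carrier_mat d d"
    and M: "\<forall>n<r2. M n \<in> carrier_mat d d"
    and eq: "\<forall>X. kraus_map d r K X = of_real t \<cdot>\<^sub>m kraus_map d r1 N X + of_real (1 - t) \<cdot>\<^sub>m kraus_map d r2 M X"
    and xy: "x \<in> {..<d} \<times> {..<d}" "y \<in> {..<d} \<times> {..<d}"
  shows "choi_kernel r K x y = of_real t * choi_kernel r1 N x y + of_real (1 - t) * choi_kernel r2 M x y"
proof -
  obtain p q p' q' where pq: "x = (p, q)" "y = (p', q')" "p < d" "q < d" "p' < d" "q' < d"
    using xy by auto
  have "kraus_map d r K (unit_mat d q q') $$ (p, p') =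
      of_real t * kraus_map d r1 N (unit_mat d q q') $$ (p, p') +
      of_real (1 - t) * kraus_map d r2 M (unit_mat d q q') $$ (p, p')"
    using eq pq by simp
  then show ?thesis
    using pq by (simp add: choi_kernel_def index_kraus_map_unit_mat[OF K] index_kraus_map_unit_mat[OF N]
      index_kraus_map_unit_mat[OF M])
qed

lemma hs_inner_zero_of_convex:
  fixes t :: real
  assumes kernel: "\<forall>x\<in>{..<d} \<times> {..<d}. \<forall>y\<in>{..<d} \<times> {..<d}.
      choi_kernel r K x y = of_real t * choi_kernel r1 N x y + of_real (1 - t) * choi_kernel r2 M x y"
    and t: "0 < t" "t < 1" and orth: "\<forall>n<r. hs_inner d R (K n) = 0" and n: "n < r1"
  shows "hs_inner d R (N n) = 0"
proof -
  let ?S = "{..<d} \<times> {..<d}"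
  let ?Q = "\<lambda>r K. \<Sum>n<r. (cmod (hs_inner d R (K n)))\<^sup>2"
  have "(\<Sum>x\<in>?S. \<Sum>y\<in>?S. cnj (R $$ x) * R $$ y * choi_kernel r K x y) =
      of_real t * (\<Sum>x\<in>?S. \<Sum>y\<in>?S. cnj (R $$ x) * R $$ y * choi_kernel r1 N x y) +
      of_real (1 - t) * (\<Sum>x\<in>?S. \<Sum>y\<in>?S. cnj (R $$ x) * R $$ y * choi_kernel r2 M x y)"
  proof -
    have "(\<Sum>x\<in>?S. \<Sum>y\<in>?S. cnj (R $$ x) * R $$ y * choi_kernel r K x y) =
        (\<Sum>x\<in>?S. \<Sum>y\<in>?S. of_real t * (cnj (R $$ x) * R $$ y * choi_kernel r1 N x y) +
          of_real (1 - t) * (cnj (R $$ x) * R $$ y * choi_kernel r2 M x y))"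
    proof (intro sum.cong refl)
      fix x y assume "x \<in> ?S" "y \<in> ?S"
      then have e: "choi_kernel r K x y = of_real t * choi_kernel r1 N x y + of_real (1 - t) * choi_kernel r2 M x y"
        using kernel by blast
      show "cnj (R $$ x) * R $$ y * choi_kernel r K x y = of_real t * (cnj (R $$ x) * R $$ y * choi_kernel r1 N x y) +
          of_real (1 - t) * (cnj (R $$ x) * R $$ y * choi_kernel r2 M x y)"
        unfolding e by (simp only: distrib_left mult_ac)
    qed
    then show ?thesis by (simp add: sum.distrib sum_distrib_left)
  qed
  then have "complex_of_real (?Q r K) = complex_of_real (t * ?Q r1 N + (1 - t) * ?Q r2 M)"
    by (simp add: choi_kernel_quadratic_form)
  moreover have "?Q r K = 0" using orth by simp
  ultimately have "t * ?Q r1 N + (1 - t) * ?Q r2 M = 0"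
    by (simp only: of_real_eq_iff)
  moreover have "t * ?Q r1 N \<ge> 0" "(1 - t) * ?Q r2 M \<ge> 0"
    using t by (simp_all add: sum_nonneg)
  ultimately have "t * ?Q r1 N = 0" by linarith
  then have "?Q r1 N = 0" using t by simp
  then show ?thesis using n by (simp add: sum_nonneg_eq_0_iff)
qed

lemma kraus_ops_in_span:
  fixes t :: real
  assumes orth: "\<forall>i<r. \<forall>j<r. i \<noteq> j \<longrightarrow> hs_inner d (K i) (K j) = 0"
    and nonzero: "\<forall>i<r. hs_inner d (K i) (K i) \<noteq> 0"
    and kernel: "\<forall>x\<in>{..<d} \<times> {..<d}. \<forall>y\<in>{..<d} \<times> {..<d}.
      choi_kernel r K x y = of_real t * choi_kernel r1 N x y + of_real (1 - t) * choi_kernel r2 M x y"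
    and t: "0 < t" "t < 1" and n: "n < r1" and x: "x \<in> {..<d} \<times> {..<d}"
  shows "N n $$ x = (\<Sum>i<r. hs_inner d (K i) (N n) / hs_inner d (K i) (K i) * K i $$ x)"
proof -
  define c where "c i = hs_inner d (K i) (N n) / hs_inner d (K i) (K i)" for i
  define R where "R = mat d d (\<lambda>x. N n $$ x - (\<Sum>i<r. c i * K i $$ x))"
  have R: "\<forall>x\<in>{..<d} \<times> {..<d}. R $$ x = N n $$ x - (\<Sum>i<r. c i * K i $$ x)"
    by (auto simp: R_def)
  have "hs_inner d (K j) R = 0" if "j < r" for j
  proof -
    have "hs_inner d (K j) R = hs_inner d (K j) (N n) - (\<Sum>i<r. c i * hs_inner d (K j) (K i))"
      by (rule hs_inner_lincomb[OF R])
    also have "(\<Sum>i<r. c i * hs_inner d (K j) (K i)) = (\<Sum>i<r. if i = j then c j * hs_inner d (K j) (K j) else 0)"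
      using orth that by (intro sum.cong refl) auto
    also have "\<dots> = c j * hs_inner d (K j) (K j)"
      using that by simp
    also have "c j * hs_inner d (K j) (K j) = hs_inner d (K j) (N n)"
      using nonzero that by (simp add: c_def)
    finally show ?thesis by simp
  qed
  then have R_orth: "\<forall>j<r. hs_inner d R (K j) = 0"
    by (metis hs_inner_commute complex_cnj_zero)
  have "hs_inner d R R = hs_inner d R (N n) - (\<Sum>i<r. c i * hs_inner d R (K i))"
    by (rule hs_inner_lincomb[OF R])
  also have "\<dots> = 0"
    using hs_inner_zero_of_convex[OF kernel t R_orth n] R_orth by simp
  finally have "R $$ x = 0" using hs_inner_self_eq_0 x by blast
  then show ?thesis using R x by (simp add: c_def)
qed

lemma sandwich_lincomb:
  assumes L: "L \<in> carrier_mat d d" and K: "\<forall>i<r. K i \<in> carrier_mat d d" and X: "X \<in> carrier_mat d d"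
    and span: "\<forall>x\<in>{..<d} \<times> {..<d}. L $$ x = (\<Sum>i<r. c i * K i $$ x)" and pq: "p < d" "q < d"
  shows "(L * X * mat_adjoint L) $$ (p, q) =
    (\<Sum>i<r. \<Sum>j<r. c i * cnj (c j) * (K i * X * mat_adjoint (K j)) $$ (p, q))"
proof -
  have entry: "L $$ (p, a) * X $$ (a, b) * cnj (L $$ (q, b)) =
      (\<Sum>i<r. \<Sum>j<r. c i * cnj (c j) * (K i $$ (p, a) * X $$ (a, b) * cnj (K j $$ (q, b))))"
    if "a < d" "b < d" for a b
  proof -
    have "L $$ (p, a) * X $$ (a, b) * cnj (L $$ (q, b)) =
        (\<Sum>i<r. c i * K i $$ (p, a)) * (\<Sum>j<r. X $$ (a, b) * (cnj (c j) * cnj (K j $$ (q, b))))"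
      using span that pq by (simp add: cnj_sum sum_distrib_left mult.assoc)
    also have "\<dots> = (\<Sum>i<r. \<Sum>j<r. c i * K i $$ (p, a) * (X $$ (a, b) * (cnj (c j) * cnj (K j $$ (q, b)))))"
      by (rule sum_product)
    finally show ?thesis by (simp only: mult_ac)
  qed
  have "(L * X * mat_adjoint L) $$ (p, q) =
      (\<Sum>a<d. \<Sum>b<d. \<Sum>i<r. \<Sum>j<r. c i * cnj (c j) * (K i $$ (p, a) * X $$ (a, b) * cnj (K j $$ (q, b))))"
    unfolding index_sandwich[OF L X L pq] by (intro sum.cong refl entry) auto
  also have "\<dots> = (\<Sum>i<r. \<Sum>j<r. \<Sum>a<d. \<Sum>b<d. c i * cnj (c j) * (K i $$ (p, a) * X $$ (a, b) * cnj (K j $$ (q, b))))"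
    by (rule sum_swap_inner_pairs)
  also have "\<dots> = (\<Sum>i<r. \<Sum>j<r. c i * cnj (c j) * (K i * X * mat_adjoint (K j)) $$ (p, q))"
  proof (intro sum.cong refl)
    fix i j assume "i \<in> {..<r}" "j \<in> {..<r}"
    then have "(K i * X * mat_adjoint (K j)) $$ (p, q) =
        (\<Sum>a<d. \<Sum>b<d. K i $$ (p, a) * X $$ (a, b) * cnj (K j $$ (q, b)))"
      using K X pq by (intro index_sandwich) auto
    then show "(\<Sum>a<d. \<Sum>b<d. c i * cnj (c j) * (K i $$ (p, a) * X $$ (a, b) * cnj (K j $$ (q, b)))) =
        c i * cnj (c j) * (K i * X * mat_adjoint (K j)) $$ (p, q)"
      by (simp add: sum_distrib_left)
  qed
  finally show ?thesis .
qed

lemma kraus_map_lincomb: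
  assumes N: "\<forall>n<r1. N n \<in> carrier_mat d d" and K: "\<forall>i<r. K i \<in> carrier_mat d d"
    and span: "\<forall>n<r1. \<forall>x\<in>{..<d} \<times> {..<d}. N n $$ x = (\<Sum>i<r. c n i * K i $$ x)"
    and X: "X \<in> carrier_mat d d" and pq: "p < d" "q < d"
  shows "kraus_map d r1 N X $$ (p, q) =
    (\<Sum>i<r. \<Sum>j<r. (\<Sum>n<r1. c n i * cnj (c n j)) * (K i * X * mat_adjoint (K j)) $$ (p, q))"
proof -
  have "kraus_map d r1 N X $$ (p, q) =
      (\<Sum>n<r1. \<Sum>i<r. \<Sum>j<r. c n i * cnj (c n j) * (K i * X * mat_adjoint (K j)) $$ (p, q))"
    unfolding index_kraus_map[OF X pq]
  proof (intro sum.cong refl)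
    fix n assume "n \<in> {..<r1}"
    then show "(N n * X * mat_adjoint (N n)) $$ (p, q) =
        (\<Sum>i<r. \<Sum>j<r. c n i * cnj (c n j) * (K i * X * mat_adjoint (K j)) $$ (p, q))"
      using N K X span pq by (intro sandwich_lincomb) auto
  qed
  also have "\<dots> = (\<Sum>i<r. \<Sum>j<r. \<Sum>n<r1. c n i * cnj (c n j) * (K i * X * mat_adjoint (K j)) $$ (p, q))"
    by (rule sum_swap3)
  finally show ?thesis by (simp add: sum_distrib_right)
qed

lemma trace_sandwich_unit_mat:
  assumes "K \<in> carrier_mat d d" "L \<in> carrier_mat d d" "x < d" "y < d"
  shows "(\<Sum>m<d. (K * unit_mat d y x * mat_adjoint L) $$ (m, m)) = (mat_adjoint L * K) $$ (x, y)"
proof -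
  have "(\<Sum>m<d. (K * unit_mat d y x * mat_adjoint L) $$ (m, m)) = (\<Sum>m<d. K $$ (m, y) * cnj (L $$ (m, x)))"
    using assms by (intro sum.cong refl sandwich_unit_mat) auto
  then show ?thesis
    unfolding index_mat_adjoint_mult[OF assms] by (simp add: mult.commute)
qed

lemma gram_eq_delta_of_products:
  fixes G :: "nat \<Rightarrow> nat \<Rightarrow> complex"
  assumes indep: "lin_indep_mat_pairs d ({..<r} \<times> {..<r}) (prods_adj K) (adj_prods K)"
    and P: "\<forall>p<d. \<forall>q<d. (\<Sum>i<r. \<Sum>j<r. G i j * prods_adj K (i, j) $$ (p, q)) = (\<Sum>i<r. prods_adj K (i, i) $$ (p, q))"
    and Q: "\<forall>p<d. \<forall>q<d. (\<Sum>i<r. \<Sum>j<r. G i j * adj_prods K (i, j) $$ (p, q)) = (\<Sum>i<r. adj_prods K (i, i) $$ (p, q))"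
    and ij: "i < r" "j < r"
  shows "G i j = (if i = j then 1 else 0)"
proof -
  define c where "c = (\<lambda>(i, j). G i j - (if i = j then 1 else 0))"
  have combination: "(\<Sum>x\<in>{..<r} \<times> {..<r}. c x * F x) = (\<Sum>i<r. \<Sum>j<r. G i j * F (i, j)) - (\<Sum>i<r. F (i, i))"
    for F :: "nat \<times> nat \<Rightarrow> complex"
  proof -
    have "(\<Sum>x\<in>{..<r} \<times> {..<r}. c x * F x) =
        (\<Sum>i<r. \<Sum>j<r. G i j * F (i, j) - (if i = j then F (i, j) else 0))"
      unfolding sum.cartesian_product by (intro sum.cong refl) (auto simp: c_def left_diff_distrib)
    then show ?thesis by (simp add: sum_subtractf)
  qed
  have "\<forall>p<d. \<forall>q<d. (\<Sum>x\<in>{..<r} \<times> {..<r}. c x * prods_adj K x $$ (p, q)) = 0"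
    using P by (simp only: combination) simp
  moreover have "\<forall>p<d. \<forall>q<d. (\<Sum>x\<in>{..<r} \<times> {..<r}. c x * adj_prods K x $$ (p, q)) = 0"
    using Q by (simp only: combination) simp
  ultimately have "\<forall>x\<in>{..<r} \<times> {..<r}. c x = 0"
    using indep unfolding lin_indep_mat_pairs_def by blast
  then show ?thesis using ij by (auto simp: c_def)
qed

lemma kraus_map_gram_expansion:
  fixes t :: real
  assumes K: "\<forall>i<r. K i \<in> carrier_mat d d"
    and orth: "\<forall>i<r. \<forall>j<r. i \<noteq> j \<longrightarrow> hs_inner d (K i) (K j) = 0"
    and nonzero: "\<forall>i<r. hs_inner d (K i) (K i) \<noteq> 0"
    and N: "\<forall>n<r1. N n \<in> carrier_mat d d" and M: "\<forall>n<r2. M n \<in> carrier_mat d d"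
    and t: "0 < t" "t < 1"
    and eq: "\<forall>X. kraus_map d r K X = of_real t \<cdot>\<^sub>m kraus_map d r1 N X + of_real (1 - t) \<cdot>\<^sub>m kraus_map d r2 M X"
  obtains G where "\<And>X p q. X \<in> carrier_mat d d \<Longrightarrow> p < d \<Longrightarrow> q < d \<Longrightarrow>
    kraus_map d r1 N X $$ (p, q) = (\<Sum>i<r. \<Sum>j<r. G i j * (K i * X * mat_adjoint (K j)) $$ (p, q))"
proof -
  define c where "c n i = hs_inner d (K i) (N n) / hs_inner d (K i) (K i)" for n i
  have kernel: "\<forall>x\<in>{..<d} \<times> {..<d}. \<forall>y\<in>{..<d} \<times> {..<d}.
      choi_kernel r K x y = of_real t * choi_kernel r1 N x y + of_real (1 - t) * choi_kernel r2 M x y"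
    using choi_kernel_convex[OF K N M eq] by blast
  have "\<forall>n<r1. \<forall>x\<in>{..<d} \<times> {..<d}. N n $$ x = (\<Sum>i<r. c n i * K i $$ x)"
    unfolding c_def using kraus_ops_in_span[OF orth nonzero kernel t] by blast
  then show ?thesis
    using that[of "\<lambda>i j. \<Sum>n<r1. c n i * cnj (c n j)"] kraus_map_lincomb[OF N K] by blast
qed

lemma gram_eq_delta:
  assumes K: "\<forall>i<r. K i \<in> carrier_mat d d"
    and indep: "lin_indep_mat_pairs d ({..<r} \<times> {..<r}) (prods_adj K) (adj_prods K)"
    and N_expansion: "\<And>X p q. X \<in> carrier_mat d d \<Longrightarrow> p < d \<Longrightarrow> q < d \<Longrightarrow>
      kraus_map d r1 N X $$ (p, q) = (\<Sum>i<r. \<Sum>j<r. G i j * (K i * X * mat_adjoint (K j)) $$ (p, q))"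
    and one: "kraus_map d r1 N (1\<^sub>m d) = kraus_map d r K (1\<^sub>m d)"
    and trace: "\<forall>X\<in>carrier_mat d d. mtrace (kraus_map d r1 N X) = mtrace (kraus_map d r K X)"
    and ij: "i < r" "j < r"
  shows "G i j = (if i = j then 1 else 0)"
proof (rule gram_eq_delta_of_products[OF indep _ _ ij]; intro allI impI)
  fix p q assume pq: "p < d" "q < d"
  have "(\<Sum>i<r. \<Sum>j<r. G i j * prods_adj K (i, j) $$ (p, q)) = kraus_map d r1 N (1\<^sub>m d) $$ (p, q)"
    unfolding N_expansion[OF one_carrier_mat pq] using K by (auto simp: prods_adj_def intro!: sum.cong)
  also have "\<dots> = (\<Sum>i<r. prods_adj K (i, i) $$ (p, q))"
    using pq by (simp add: one kraus_map_one[OF K] sum_prods_adj_def)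
  finally show "(\<Sum>i<r. \<Sum>j<r. G i j * prods_adj K (i, j) $$ (p, q)) = (\<Sum>i<r. prods_adj K (i, i) $$ (p, q))" .
next
  \<comment> \<open>the trace condition, tested on the matrix units, gives the equations for \<open>adj_prods\<close>\<close>
  fix x y assume xy: "x < d" "y < d"
  let ?E = "unit_mat d y x"
  have "(\<Sum>i<r. \<Sum>j<r. G i j * adj_prods K (i, j) $$ (x, y)) =
      (\<Sum>i<r. \<Sum>j<r. \<Sum>m<d. G i j * (K i * ?E * mat_adjoint (K j)) $$ (m, m))"
  proof (intro sum.cong refl)
    fix i j assume "i \<in> {..<r}" "j \<in> {..<r}"
    then have "(\<Sum>m<d. (K i * ?E * mat_adjoint (K j)) $$ (m, m)) = adj_prods K (i, j) $$ (x, y)"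
      using K xy by (simp add: adj_prods_def trace_sandwich_unit_mat)
    then show "G i j * adj_prods K (i, j) $$ (x, y) = (\<Sum>m<d. G i j * (K i * ?E * mat_adjoint (K j)) $$ (m, m))"
      by (simp add: sum_distrib_left[symmetric])
  qed
  also have "\<dots> = mtrace (kraus_map d r1 N ?E)"
    using xy by (simp add: mtrace_def N_expansion sum_swap3[of _ "{..<r}" "{..<r}" "{..<d}"])
  also have "\<dots> = mtrace (kraus_map d r K ?E)"
    using trace by simp
  also have "\<dots> = (\<Sum>i<r. \<Sum>m<d. (K i * ?E * mat_adjoint (K i)) $$ (m, m))"
    using K xy by (simp add: mtrace_def index_kraus_map sum.swap[of _ "{..<d}"])
  also have "\<dots> = (\<Sum>i<r. adj_prods K (i, i) $$ (x, y))"
    using K xy by (intro sum.cong refl) (simp add: adj_prods_def trace_sandwich_unit_mat)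
  finally show "(\<Sum>i<r. \<Sum>j<r. G i j * adj_prods K (i, j) $$ (x, y)) = (\<Sum>i<r. adj_prods K (i, i) $$ (x, y))" .
qed

lemma kraus_map_eq_of_convex_decomposition:
  fixes t :: real
  assumes K: "\<forall>i<r. K i \<in> carrier_mat d d"
    and orth: "\<forall>i<r. \<forall>j<r. i \<noteq> j \<longrightarrow> hs_inner d (K i) (K j) = 0"
    and nonzero: "\<forall>i<r. hs_inner d (K i) (K i) \<noteq> 0"
    and indep: "lin_indep_mat_pairs d ({..<r} \<times> {..<r}) (prods_adj K) (adj_prods K)"
    and N: "\<forall>n<r1. N n \<in> carrier_mat d d" and M: "\<forall>n<r2. M n \<in> carrier_mat d d"
    and t: "0 < t" "t < 1"
    and eq: "\<forall>X. kraus_map d r K X = of_real t \<cdot>\<^sub>m kraus_map d r1 N X + of_real (1 - t) \<cdot>\<^sub>m kraus_map d r2 M X"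
    and one: "kraus_map d r1 N (1\<^sub>m d) = kraus_map d r K (1\<^sub>m d)"
    and trace: "\<forall>X\<in>carrier_mat d d. mtrace (kraus_map d r1 N X) = mtrace (kraus_map d r K X)"
  shows "kraus_map d r1 N = kraus_map d r K"
proof
  fix X
  obtain G where N_expansion: "\<And>X p q. X \<in> carrier_mat d d \<Longrightarrow> p < d \<Longrightarrow> q < d \<Longrightarrow>
      kraus_map d r1 N X $$ (p, q) = (\<Sum>i<r. \<Sum>j<r. G i j * (K i * X * mat_adjoint (K j)) $$ (p, q))"
    using kraus_map_gram_expansion[OF K orth nonzero N M t eq] by blast
  note G = gram_eq_delta[OF K indep N_expansion one trace]
  show "kraus_map d r1 N X = kraus_map d r K X"
  proof (cases "X \<in> carrier_mat d d")
    case True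
    show ?thesis
    proof (rule eq_matI)
      fix p q assume "p < dim_row (kraus_map d r K X)" "q < dim_col (kraus_map d r K X)"
      then have pq: "p < d" "q < d" by simp_all
      have "kraus_map d r1 N X $$ (p, q) =
          (\<Sum>i<r. \<Sum>j<r. (if i = j then 1 else 0) * (K i * X * mat_adjoint (K j)) $$ (p, q))"
        using G by (simp add: N_expansion[OF True pq])
      also have "\<dots> = kraus_map d r K X $$ (p, q)"
        by (simp add: index_kraus_map[OF True pq] if_distrib[of "\<lambda>z. z * _"] cong: if_cong)
      finally show "kraus_map d r1 N X $$ (p, q) = kraus_map d r K X $$ (p, q)" .
    qed simp_all
  qed (simp add: kraus_map_def)
qed

lemma CP_set_carrier: "\<Phi> \<in> CP_set d d A B \<Longrightarrow> \<Phi> X \<in> carrier_mat d d"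
  by (metis CP_set_kraus_map kraus_map_carrier)

theorem kraus_map_extreme_point:
  assumes K: "\<forall>i<r. K i \<in> carrier_mat d d"
    and orth: "\<forall>i<r. \<forall>j<r. i \<noteq> j \<longrightarrow> hs_inner d (K i) (K j) = 0"
    and nonzero: "\<forall>i<r. hs_inner d (K i) (K i) \<noteq> 0"
    and indep: "lin_indep_mat_pairs d ({..<r} \<times> {..<r}) (prods_adj K) (adj_prods K)"
    and member: "kraus_map d r K \<in> CP_set d d A B"
  shows "extreme_point_of (kraus_map d r K) (CP_set d d A B)"
proof -
  have component: "\<Phi>1 = kraus_map d r K"
    if \<Phi>1: "\<Phi>1 \<in> CP_set d d A B" and \<Phi>2: "\<Phi>2 \<in> CP_set d d A B" and t: "0 < t" "t < 1"
      and eq: "\<forall>X. kraus_map d r K X = of_real t \<cdot>\<^sub>m \<Phi>1 X + of_real (1 - t) \<cdot>\<^sub>m \<Phi>2 X"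
    for \<Phi>1 \<Phi>2 and t :: real
  proof -
    obtain r1 N where N: "\<forall>n<r1. N n \<in> carrier_mat d d" "\<Phi>1 = kraus_map d r1 N"
      using CP_set_kraus_map[OF \<Phi>1] by blast
    obtain r2 M where M: "\<forall>n<r2. M n \<in> carrier_mat d d" "\<Phi>2 = kraus_map d r2 M"
      using CP_set_kraus_map[OF \<Phi>2] by blast
    have "kraus_map d r1 N (1\<^sub>m d) = kraus_map d r K (1\<^sub>m d)"
      using \<Phi>1 member N(2) by (simp add: CP_set_def)
    moreover have "\<forall>X\<in>carrier_mat d d. mtrace (kraus_map d r1 N X) = mtrace (kraus_map d r K X)"
      using \<Phi>1 member N(2) by (simp add: CP_set_def)
    ultimately show ?thesis
      using kraus_map_eq_of_convex_decomposition[OF K orth nonzero indep N(1) M(1) t] eq N(2) M(2) by simp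
  qed
  show ?thesis unfolding extreme_point_of_def
  proof (intro conjI member notI)
    assume "\<exists>t::real. \<exists>\<Phi>1\<in>CP_set d d A B. \<exists>\<Phi>2\<in>CP_set d d A B. 0 < t \<and> t < 1 \<and> \<Phi>1 \<noteq> \<Phi>2 \<and>
      kraus_map d r K = (\<lambda>X. of_real t \<cdot>\<^sub>m \<Phi>1 X + of_real (1 - t) \<cdot>\<^sub>m \<Phi>2 X)"
    then obtain t :: real and \<Phi>1 \<Phi>2 where \<Phi>: "\<Phi>1 \<in> CP_set d d A B" "\<Phi>2 \<in> CP_set d d A B"
      and t: "0 < t" "t < 1" and ne: "\<Phi>1 \<noteq> \<Phi>2"
      and eq: "\<forall>X. kraus_map d r K X = of_real t \<cdot>\<^sub>m \<Phi>1 X + of_real (1 - t) \<cdot>\<^sub>m \<Phi>2 X"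
      by (metis (no_types, lifting))
    have "\<forall>X. kraus_map d r K X = of_real (1 - t) \<cdot>\<^sub>m \<Phi>2 X + of_real (1 - (1 - t)) \<cdot>\<^sub>m \<Phi>1 X"
      using eq CP_set_carrier[OF \<Phi>(1)] CP_set_carrier[OF \<Phi>(2)] by (simp add: comm_add_mat[of _ d d])
    moreover have "0 < 1 - t" "1 - t < 1" using t by simp_all
    ultimately have "\<Phi>2 = kraus_map d r K"
      by (intro component[OF \<Phi>(2,1)])
    moreover have "\<Phi>1 = kraus_map d r K"
      using component[OF \<Phi> t eq] .
    ultimately show False using ne by simp
  qed
qed

subsection \<open>Linear independence of families of matrices\<close>

definition lin_indep_mats :: "nat \<Rightarrow> 'a set \<Rightarrow> ('a \<Rightarrow> complex mat) \<Rightarrow> bool" where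
  "lin_indep_mats d I F \<longleftrightarrow> (\<forall>c. (\<forall>p<d. \<forall>q<d. (\<Sum>x\<in>I. c x * F x $$ (p, q)) = 0) \<longrightarrow> (\<forall>x\<in>I. c x = 0))"

lemma lin_indep_matsD:
  "lin_indep_mats d I F \<Longrightarrow> (\<And>p q. p < d \<Longrightarrow> q < d \<Longrightarrow> (\<Sum>x\<in>I. c x * F x $$ (p, q)) = 0) \<Longrightarrow> x \<in> I \<Longrightarrow> c x = 0"
  unfolding lin_indep_mats_def by blast

lemma lin_indep_mat_pairsD:
  "lin_indep_mat_pairs d I F G \<Longrightarrow> (\<And>p q. p < d \<Longrightarrow> q < d \<Longrightarrow> (\<Sum>x\<in>I. c x * F x $$ (p, q)) = 0) \<Longrightarrow>
    (\<And>p q. p < d \<Longrightarrow> q < d \<Longrightarrow> (\<Sum>x\<in>I. c x * G x $$ (p, q)) = 0) \<Longrightarrow> x \<in> I \<Longrightarrow> c x = 0"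
  unfolding lin_indep_mat_pairs_def by blast

lemma lin_indep_mats_reindex:
  assumes h: "bij_betw h J I" and F': "\<forall>y\<in>J. F' y = F (h y)" and indep: "lin_indep_mats d J F'"
  shows "lin_indep_mats d I F"
  unfolding lin_indep_mats_def
proof (intro allI impI ballI)
  fix c x assume zero: "\<forall>p<d. \<forall>q<d. (\<Sum>x\<in>I. c x * F x $$ (p, q)) = 0" and x: "x \<in> I"
  obtain y where y: "y \<in> J" "x = h y" using h x by (auto simp: bij_betw_def)
  have "(\<Sum>y\<in>J. c (h y) * F' y $$ (p, q)) = (\<Sum>y\<in>J. c (h y) * F (h y) $$ (p, q))" for p q
    using F' by (intro sum.cong) auto
  also have "\<dots> p q = (\<Sum>x\<in>I. c x * F x $$ (p, q))" for p q
    by (rule sum.reindex_bij_betw[OF h])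
  finally have reindexed: "(\<Sum>y\<in>J. c (h y) * F' y $$ (p, q)) = (\<Sum>x\<in>I. c x * F x $$ (p, q))" for p q .
  then have "c (h y) = 0"
    using zero y(1) reindexed by (intro lin_indep_matsD[OF indep, of "\<lambda>y. c (h y)"]) auto
  then show "c x = 0" using y(2) by simp
qed

lemma lin_indep_mat_pairs_reindex:
  assumes h: "bij_betw h J I" and F': "\<forall>y\<in>J. F' y = F (h y)" and G': "\<forall>y\<in>J. G' y = G (h y)"
    and indep: "lin_indep_mat_pairs d J F' G'"
  shows "lin_indep_mat_pairs d I F G"
  unfolding lin_indep_mat_pairs_def
proof (intro allI impI ballI)
  fix c x assume zero: "(\<forall>p<d. \<forall>q<d. (\<Sum>x\<in>I. c x * F x $$ (p, q)) = 0) \<and> (\<forall>p<d. \<forall>q<d. (\<Sum>x\<in>I. c x * G x $$ (p, q)) = 0)"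
    and x: "x \<in> I"
  obtain y where y: "y \<in> J" "x = h y" using h x by (auto simp: bij_betw_def)
  have reindexed: "(\<Sum>y\<in>J. c (h y) * H' y $$ (p, q)) = (\<Sum>x\<in>I. c x * H x $$ (p, q))"
    if "\<forall>y\<in>J. H' y = H (h y)" for H H' p q
  proof -
    have "(\<Sum>y\<in>J. c (h y) * H' y $$ (p, q)) = (\<Sum>y\<in>J. c (h y) * H (h y) $$ (p, q))"
      using that by (intro sum.cong) auto
    also have "\<dots> = (\<Sum>x\<in>I. c x * H x $$ (p, q))"
      by (rule sum.reindex_bij_betw[OF h])
    finally show ?thesis .
  qed
  have "c (h y) = 0"
    using zero y(1) reindexed[OF F'] reindexed[OF G']
    by (intro lin_indep_mat_pairsD[OF indep, of "\<lambda>y. c (h y)"]) auto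
  then show "c x = 0" using y(2) by simp
qed

lemma lin_indep_mats_transpose:
  assumes F: "\<forall>x\<in>I. F x \<in> carrier_mat d d" and indep: "lin_indep_mats d I F"
  shows "lin_indep_mats d I (\<lambda>x. transpose_mat (F x))"
  unfolding lin_indep_mats_def
proof (intro allI impI ballI)
  fix c x assume zero: "\<forall>p<d. \<forall>q<d. (\<Sum>x\<in>I. c x * transpose_mat (F x) $$ (p, q)) = 0" and x: "x \<in> I"
  have "(\<Sum>x\<in>I. c x * F x $$ (p, q)) = (\<Sum>x\<in>I. c x * transpose_mat (F x) $$ (q, p))"
    if "p < d" "q < d" for p q
    using F that by (intro sum.cong) auto
  then show "c x = 0" using zero x by (intro lin_indep_matsD[OF indep, of c]) auto
qed

lemma lin_indep_mats_smult:
  assumes F: "\<forall>x\<in>I. F x \<in> carrier_mat d d" and e: "\<forall>x\<in>I. e x \<noteq> 0" and indep: "lin_indep_mats d I F"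
  shows "lin_indep_mats d I (\<lambda>x. e x \<cdot>\<^sub>m F x)"
  unfolding lin_indep_mats_def
proof (intro allI impI ballI)
  fix c x assume zero: "\<forall>p<d. \<forall>q<d. (\<Sum>x\<in>I. c x * (e x \<cdot>\<^sub>m F x) $$ (p, q)) = 0" and x: "x \<in> I"
  have "(\<Sum>x\<in>I. (c x * e x) * F x $$ (p, q)) = (\<Sum>x\<in>I. c x * (e x \<cdot>\<^sub>m F x) $$ (p, q))"
    if "p < d" "q < d" for p q
    using that F by (intro sum.cong) auto
  then have "(\<Sum>x\<in>I. (c x * e x) * F x $$ (p, q)) = 0" if "p < d" "q < d" for p q
    using zero that by simp
  then have "c x * e x = 0" using x by (intro lin_indep_matsD[OF indep, of "\<lambda>x. c x * e x"])
  then show "c x = 0" using e x by simp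
qed

lemma lin_indep_mat_pairs_smult:
  assumes F: "\<forall>x\<in>I. F x \<in> carrier_mat d d" and G: "\<forall>x\<in>I. G x \<in> carrier_mat d d"
    and e: "\<forall>x\<in>I. e x \<noteq> 0" and indep: "lin_indep_mat_pairs d I F G"
  shows "lin_indep_mat_pairs d I (\<lambda>x. e x \<cdot>\<^sub>m F x) (\<lambda>x. e x \<cdot>\<^sub>m G x)"
  unfolding lin_indep_mat_pairs_def
proof (intro allI impI ballI)
  fix c x assume zero: "(\<forall>p<d. \<forall>q<d. (\<Sum>x\<in>I. c x * (e x \<cdot>\<^sub>m F x) $$ (p, q)) = 0) \<and>
      (\<forall>p<d. \<forall>q<d. (\<Sum>x\<in>I. c x * (e x \<cdot>\<^sub>m G x) $$ (p, q)) = 0)" and x: "x \<in> I"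
  have scaled: "(\<Sum>x\<in>I. (c x * e x) * H x $$ (p, q)) = (\<Sum>x\<in>I. c x * (e x \<cdot>\<^sub>m H x) $$ (p, q))"
    if "\<forall>x\<in>I. H x \<in> carrier_mat d d" "p < d" "q < d" for H p q
    using that by (intro sum.cong) auto
  have "(\<Sum>x\<in>I. (c x * e x) * F x $$ (p, q)) = 0" "(\<Sum>x\<in>I. (c x * e x) * G x $$ (p, q)) = 0"
    if "p < d" "q < d" for p q
    using zero that scaled[OF F that] scaled[OF G that] by simp_all
  then have "c x * e x = 0" using x by (intro lin_indep_mat_pairsD[OF indep, of "\<lambda>x. c x * e x"])
  then show "c x = 0" using e x by simp
qed

lemma kron_combination_eq_0_left:
  assumes F: "\<forall>a\<in>I. F a \<in> carrier_mat d1 d1" and G: "\<forall>b\<in>J. G b \<in> carrier_mat d2 d2"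
    and indep: "lin_indep_mats d1 I F"
    and zero: "\<forall>P<d1 * d2. \<forall>Q<d1 * d2. (\<Sum>(a, b)\<in>I \<times> J. c (a, b) * kron (F a) (G b) $$ (P, Q)) = 0"
    and a: "a \<in> I" and xy: "x < d2" "y < d2"
  shows "(\<Sum>b\<in>J. c (a, b) * G b $$ (x, y)) = 0"
proof (rule lin_indep_matsD[OF indep _ a])
  fix p q assume pq: "p < d1" "q < d1"
  have "(\<Sum>a\<in>I. (\<Sum>b\<in>J. c (a, b) * G b $$ (x, y)) * F a $$ (p, q)) =
      (\<Sum>(a, b)\<in>I \<times> J. c (a, b) * kron (F a) (G b) $$ (p * d2 + x, q * d2 + y))"
    unfolding sum.cartesian_product[symmetric] sum_distrib_right
  proof (intro sum.cong refl)
    fix a b assume "a \<in> I" "b \<in> J"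
    then have "kron (F a) (G b) $$ (p * d2 + x, q * d2 + y) = F a $$ (p, q) * G b $$ (x, y)"
      using F G pq xy by (intro index_kron) auto
    then show "c (a, b) * G b $$ (x, y) * F a $$ (p, q) = c (a, b) * kron (F a) (G b) $$ (p * d2 + x, q * d2 + y)"
      by simp
  qed
  also have "\<dots> = 0" using zero pq xy by (simp add: pair_index_less)
  finally show "(\<Sum>a\<in>I. (\<Sum>b\<in>J. c (a, b) * G b $$ (x, y)) * F a $$ (p, q)) = 0" .
qed

lemma kron_combination_eq_0_right:
  assumes F: "\<forall>a\<in>I. F a \<in> carrier_mat d1 d1" and G: "\<forall>b\<in>J. G b \<in> carrier_mat d2 d2"
    and indep: "lin_indep_mats d2 J G"
    and zero: "\<forall>P<d1 * d2. \<forall>Q<d1 * d2. (\<Sum>(a, b)\<in>I \<times> J. c (a, b) * kron (F a) (G b) $$ (P, Q)) = 0"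
    and b: "b \<in> J" and pq: "p < d1" "q < d1"
  shows "(\<Sum>a\<in>I. c (a, b) * F a $$ (p, q)) = 0"
proof (rule lin_indep_matsD[OF indep _ b])
  fix x y assume xy: "x < d2" "y < d2"
  have "(\<Sum>b\<in>J. (\<Sum>a\<in>I. c (a, b) * F a $$ (p, q)) * G b $$ (x, y)) =
      (\<Sum>(a, b)\<in>I \<times> J. c (a, b) * kron (F a) (G b) $$ (p * d2 + x, q * d2 + y))"
    unfolding sum.cartesian_product[symmetric] sum_distrib_right sum.swap[of _ J]
  proof (intro sum.cong refl)
    fix a b assume "a \<in> I" "b \<in> J"
    then have "kron (F a) (G b) $$ (p * d2 + x, q * d2 + y) = F a $$ (p, q) * G b $$ (x, y)"
      using F G pq xy by (intro index_kron) auto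
    then show "c (a, b) * F a $$ (p, q) * G b $$ (x, y) = c (a, b) * kron (F a) (G b) $$ (p * d2 + x, q * d2 + y)"
      by simp
  qed
  also have "\<dots> = 0" using zero pq xy by (simp add: pair_index_less)
  finally show "(\<Sum>b\<in>J. (\<Sum>a\<in>I. c (a, b) * F a $$ (p, q)) * G b $$ (x, y)) = 0" .
qed

lemma lin_indep_mat_pairs_kron_left:
  assumes F: "\<forall>a\<in>I. F a \<in> carrier_mat d1 d1" and G: "\<forall>a\<in>I. G a \<in> carrier_mat d1 d1"
    and F': "\<forall>b\<in>J. F' b \<in> carrier_mat d2 d2" and G': "\<forall>b\<in>J. G' b \<in> carrier_mat d2 d2"
    and indep: "lin_indep_mat_pairs d1 I F G" and indep_F': "lin_indep_mats d2 J F'"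
    and indep_G': "lin_indep_mats d2 J G'"
  shows "lin_indep_mat_pairs (d1 * d2) (I \<times> J) (\<lambda>(a, b). kron (F a) (F' b)) (\<lambda>(a, b). kron (G a) (G' b))"
  unfolding lin_indep_mat_pairs_def
proof (intro allI impI ballI, clarify)
  fix c a b
  assume zero_F: "\<forall>P<d1 * d2. \<forall>Q<d1 * d2. (\<Sum>z\<in>I \<times> J. c z * (case z of (a, b) \<Rightarrow> kron (F a) (F' b)) $$ (P, Q)) = 0"
    and zero_G: "\<forall>P<d1 * d2. \<forall>Q<d1 * d2. (\<Sum>z\<in>I \<times> J. c z * (case z of (a, b) \<Rightarrow> kron (G a) (G' b)) $$ (P, Q)) = 0"
    and ab: "a \<in> I" "b \<in> J"
  have "(\<Sum>a\<in>I. c (a, b) * F a $$ (p, q)) = 0" "(\<Sum>a\<in>I. c (a, b) * G a $$ (p, q)) = 0"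
    if "p < d1" "q < d1" for p q
    using kron_combination_eq_0_right[OF F F' indep_F' _ ab(2) that, of c]
      kron_combination_eq_0_right[OF G G' indep_G' _ ab(2) that, of c] zero_F zero_G
    by (simp_all add: case_prod_unfold)
  then show "c (a, b) = 0"
    using ab(1) by (intro lin_indep_mat_pairsD[OF indep, of "\<lambda>a. c (a, b)"])
qed

lemma lin_indep_mat_pairs_kron_right:
  assumes F: "\<forall>a\<in>I. F a \<in> carrier_mat d1 d1" and G: "\<forall>a\<in>I. G a \<in> carrier_mat d1 d1"
    and F': "\<forall>b\<in>J. F' b \<in> carrier_mat d2 d2" and G': "\<forall>b\<in>J. G' b \<in> carrier_mat d2 d2"
    and indep_F: "lin_indep_mats d1 I F" and indep_G: "lin_indep_mats d1 I G"
    and indep: "lin_indep_mat_pairs d2 J F' G'"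
  shows "lin_indep_mat_pairs (d1 * d2) (I \<times> J) (\<lambda>(a, b). kron (F a) (F' b)) (\<lambda>(a, b). kron (G a) (G' b))"
  unfolding lin_indep_mat_pairs_def
proof (intro allI impI ballI, clarify)
  fix c a b
  assume zero_F: "\<forall>P<d1 * d2. \<forall>Q<d1 * d2. (\<Sum>z\<in>I \<times> J. c z * (case z of (a, b) \<Rightarrow> kron (F a) (F' b)) $$ (P, Q)) = 0"
    and zero_G: "\<forall>P<d1 * d2. \<forall>Q<d1 * d2. (\<Sum>z\<in>I \<times> J. c z * (case z of (a, b) \<Rightarrow> kron (G a) (G' b)) $$ (P, Q)) = 0"
    and ab: "a \<in> I" "b \<in> J"
  have "(\<Sum>b\<in>J. c (a, b) * F' b $$ (x, y)) = 0" "(\<Sum>b\<in>J. c (a, b) * G' b $$ (x, y)) = 0"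
    if "x < d2" "y < d2" for x y
    using kron_combination_eq_0_left[OF F F' indep_F _ ab(1) that, of c]
      kron_combination_eq_0_left[OF G G' indep_G _ ab(1) that, of c] zero_F zero_G
    by (simp_all add: case_prod_unfold)
  then show "c (a, b) = 0"
    using ab(2) by (intro lin_indep_mat_pairsD[OF indep, of "\<lambda>b. c (a, b)"])
qed

subsection \<open>Tensor products of Kraus families\<close>

definition kron_family :: "nat \<Rightarrow> (nat \<Rightarrow> complex mat) \<Rightarrow> (nat \<Rightarrow> complex mat) \<Rightarrow> nat \<Rightarrow> complex mat" where
  "kron_family r2 A L n = kron (A (n div r2)) (L (n mod r2))"

lemma kron_family_pair_index [simp]: "t < r2 \<Longrightarrow> kron_family r2 A L (a * r2 + t) = kron (A a) (L t)"
  by (simp add: kron_family_def)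

lemma kron_family_carrier:
  assumes "\<forall>a<r1. A a \<in> carrier_mat d1 d1" "\<forall>t<r2. L t \<in> carrier_mat d2 d2"
  shows "\<forall>n<r1 * r2. kron_family r2 A L n \<in> carrier_mat (d1 * d2) (d1 * d2)"
  using assms by (auto simp: kron_carrier elim!: lessThan_mult_cases)

lemma prods_adj_kron_family:
  assumes A: "\<forall>a<r1. A a \<in> carrier_mat d1 d1" and L: "\<forall>t<r2. L t \<in> carrier_mat d2 d2"
    and "a < r1" "b < r1" "t < r2" "s < r2"
  shows "prods_adj (kron_family r2 A L) (a * r2 + t, b * r2 + s) = kron (prods_adj A (a, b)) (prods_adj L (t, s))"
    and "adj_prods (kron_family r2 A L) (a * r2 + t, b * r2 + s) = kron (adj_prods A (a, b)) (adj_prods L (t, s))"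
  using assms by (simp_all add: prods_adj_def adj_prods_def mat_adjoint_kron kron_mult[of _ d1 d1 _ d1 _ d2 d2 _ d2])

lemma bij_betw_pair_index_pairs:
  "bij_betw (\<lambda>((a, b), (t, s)). (a * r2 + t, b * r2 + s))
     (({..<r1} \<times> {..<r1}) \<times> ({..<r2} \<times> {..<r2})) ({..<r1 * r2} \<times> {..<r1 * r2 :: nat})"
proof (rule bij_betw_byWitness[where f' = "\<lambda>(i, j). ((i div r2, j div r2), (i mod r2, j mod r2))"])
  show "(\<lambda>(i, j). ((i div r2, j div r2), (i mod r2, j mod r2))) ` ({..<r1 * r2} \<times> {..<r1 * r2}) \<subseteq>
      ({..<r1} \<times> {..<r1}) \<times> ({..<r2} \<times> {..<r2})"
    by (auto elim!: lessThan_mult_cases)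
qed (auto simp: pair_index_less)

lemma prods_adj_carrier:
  assumes "\<forall>i<r. K i \<in> carrier_mat d d"
  shows "\<forall>x\<in>{..<r} \<times> {..<r}. prods_adj K x \<in> carrier_mat d d"
    and "\<forall>x\<in>{..<r} \<times> {..<r}. adj_prods K x \<in> carrier_mat d d"
  using assms by (auto simp: prods_adj_def adj_prods_def intro!: mult_carrier_mat[of _ d d _ d])

lemma kron_family_pairs_indep_left:
  assumes A: "\<forall>a<r1. A a \<in> carrier_mat d1 d1" and L: "\<forall>t<r2. L t \<in> carrier_mat d2 d2"
    and indep_A: "lin_indep_mat_pairs d1 ({..<r1} \<times> {..<r1}) (prods_adj A) (adj_prods A)"
    and indep_L: "lin_indep_mats d2 ({..<r2} \<times> {..<r2}) (prods_adj L)"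
      "lin_indep_mats d2 ({..<r2} \<times> {..<r2}) (adj_prods L)"
  shows "lin_indep_mat_pairs (d1 * d2) ({..<r1 * r2} \<times> {..<r1 * r2})
    (prods_adj (kron_family r2 A L)) (adj_prods (kron_family r2 A L))"
  by (rule lin_indep_mat_pairs_reindex[OF bij_betw_pair_index_pairs _ _
        lin_indep_mat_pairs_kron_left[OF prods_adj_carrier[OF A] prods_adj_carrier[OF L] indep_A indep_L]])
    (auto simp: prods_adj_kron_family[OF A L])

lemma kron_family_pairs_indep_right:
  assumes A: "\<forall>a<r1. A a \<in> carrier_mat d1 d1" and L: "\<forall>t<r2. L t \<in> carrier_mat d2 d2"
    and indep_A: "lin_indep_mats d1 ({..<r1} \<times> {..<r1}) (prods_adj A)"
      "lin_indep_mats d1 ({..<r1} \<times> {..<r1}) (adj_prods A)"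
    and indep_L: "lin_indep_mat_pairs d2 ({..<r2} \<times> {..<r2}) (prods_adj L) (adj_prods L)"
  shows "lin_indep_mat_pairs (d1 * d2) ({..<r1 * r2} \<times> {..<r1 * r2})
    (prods_adj (kron_family r2 A L)) (adj_prods (kron_family r2 A L))"
  by (rule lin_indep_mat_pairs_reindex[OF bij_betw_pair_index_pairs _ _
        lin_indep_mat_pairs_kron_right[OF prods_adj_carrier[OF A] prods_adj_carrier[OF L] indep_A indep_L]])
    (auto simp: prods_adj_kron_family[OF A L])

lemma mat_sum_kron:
  assumes P: "\<forall>a<r1. P a \<in> carrier_mat d1 d1" and Q: "\<forall>t<r2. Q t \<in> carrier_mat d2 d2"
  shows "mat (d1 * d2) (d1 * d2) (\<lambda>ij. \<Sum>a<r1. \<Sum>t<r2. kron (P a) (Q t) $$ ij) =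
    kron (mat d1 d1 (\<lambda>pq. \<Sum>a<r1. P a $$ pq)) (mat d2 d2 (\<lambda>xy. \<Sum>t<r2. Q t $$ xy))"
proof (rule eq_matI)
  fix i j assume "i < dim_row (kron (mat d1 d1 (\<lambda>pq. \<Sum>a<r1. P a $$ pq)) (mat d2 d2 (\<lambda>xy. \<Sum>t<r2. Q t $$ xy)))"
    "j < dim_col (kron (mat d1 d1 (\<lambda>pq. \<Sum>a<r1. P a $$ pq)) (mat d2 d2 (\<lambda>xy. \<Sum>t<r2. Q t $$ xy)))"
  then obtain p x q y where px: "p < d1" "x < d2" "i = p * d2 + x" and qy: "q < d1" "y < d2" "j = q * d2 + y"
    by (auto elim!: lessThan_mult_cases)
  have "(\<Sum>a<r1. \<Sum>t<r2. kron (P a) (Q t) $$ (i, j)) = (\<Sum>a<r1. \<Sum>t<r2. P a $$ (p, q) * Q t $$ (x, y))"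
  proof (intro sum.cong refl)
    fix a t assume "a \<in> {..<r1}" "t \<in> {..<r2}"
    then show "kron (P a) (Q t) $$ (i, j) = P a $$ (p, q) * Q t $$ (x, y)"
      unfolding px(3) qy(3) using P Q px qy by (intro index_kron) auto
  qed
  then show "mat (d1 * d2) (d1 * d2) (\<lambda>ij. \<Sum>a<r1. \<Sum>t<r2. kron (P a) (Q t) $$ ij) $$ (i, j) =
      kron (mat d1 d1 (\<lambda>pq. \<Sum>a<r1. P a $$ pq)) (mat d2 d2 (\<lambda>xy. \<Sum>t<r2. Q t $$ xy)) $$ (i, j)"
    using px qy by (simp add: pair_index_less index_kron[of _ d1 d1 _ d2 d2] sum_product)
qed simp_all

lemma sum_prods_adj_kron_family:
  assumes A: "\<forall>a<r1. A a \<in> carrier_mat d1 d1" and L: "\<forall>t<r2. L t \<in> carrier_mat d2 d2"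
  shows "sum_prods_adj (d1 * d2) (r1 * r2) (kron_family r2 A L) = kron (sum_prods_adj d1 r1 A) (sum_prods_adj d2 r2 L)"
    and "sum_adj_prods (d1 * d2) (r1 * r2) (kron_family r2 A L) = kron (sum_adj_prods d1 r1 A) (sum_adj_prods d2 r2 L)"
proof -
  have "sum_prods_adj (d1 * d2) (r1 * r2) (kron_family r2 A L) =
      mat (d1 * d2) (d1 * d2) (\<lambda>ij. \<Sum>a<r1. \<Sum>t<r2. kron (prods_adj A (a, a)) (prods_adj L (t, t)) $$ ij)"
    unfolding sum_prods_adj_def sum_lessThan_mult by (auto simp: prods_adj_kron_family(1)[OF A L, symmetric])
  also have "\<dots> = kron (sum_prods_adj d1 r1 A) (sum_prods_adj d2 r2 L)"
    unfolding sum_prods_adj_def using prods_adj_carrier(1)[OF A] prods_adj_carrier(1)[OF L]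
    by (intro mat_sum_kron) auto
  finally show "sum_prods_adj (d1 * d2) (r1 * r2) (kron_family r2 A L) = kron (sum_prods_adj d1 r1 A) (sum_prods_adj d2 r2 L)" .
  have "sum_adj_prods (d1 * d2) (r1 * r2) (kron_family r2 A L) =
      mat (d1 * d2) (d1 * d2) (\<lambda>ij. \<Sum>a<r1. \<Sum>t<r2. kron (adj_prods A (a, a)) (adj_prods L (t, t)) $$ ij)"
    unfolding sum_adj_prods_def sum_lessThan_mult by (auto simp: prods_adj_kron_family(2)[OF A L, symmetric])
  also have "\<dots> = kron (sum_adj_prods d1 r1 A) (sum_adj_prods d2 r2 L)"
    unfolding sum_adj_prods_def using prods_adj_carrier(2)[OF A] prods_adj_carrier(2)[OF L]
    by (intro mat_sum_kron) auto
  finally show "sum_adj_prods (d1 * d2) (r1 * r2) (kron_family r2 A L) = kron (sum_adj_prods d1 r1 A) (sum_adj_prods d2 r2 L)" .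
qed

lemma index_kron_family:
  assumes "\<forall>a<r1. A a \<in> carrier_mat d1 d1" "\<forall>t<r2. L t \<in> carrier_mat d2 d2"
    and "a < r1" "t < r2" "p < d1" "q < d1" "x < d2" "y < d2"
  shows "kron_family r2 A L (a * r2 + t) $$ (p * d2 + x, q * d2 + y) = A a $$ (p, q) * L t $$ (x, y)"
  using assms by (simp add: index_kron[of "A a" d1 d1 "L t" d2 d2])

lemma disjoint_supports_kron_family:
  assumes A: "\<forall>a<r1. A a \<in> carrier_mat d1 d1" and L: "\<forall>t<r2. L t \<in> carrier_mat d2 d2"
    and disj_A: "disjoint_supports d1 r1 A" and disj_L: "disjoint_supports d2 r2 L"
  shows "disjoint_supports (d1 * d2) (r1 * r2) (kron_family r2 A L)"
  unfolding disjoint_supports_def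
proof (intro allI impI)
  fix i j P Q assume ij: "i < r1 * r2" "j < r1 * r2" "i \<noteq> j" and PQ: "P < d1 * d2" "Q < d1 * d2"
  obtain a t b s where at: "a < r1" "t < r2" "i = a * r2 + t" and bs: "b < r1" "s < r2" "j = b * r2 + s"
    using ij(1,2) by (metis lessThan_mult_cases)
  obtain p x q y where px: "p < d1" "x < d2" "P = p * d2 + x" and qy: "q < d1" "y < d2" "Q = q * d2 + y"
    using PQ by (metis lessThan_mult_cases)
  have "A a $$ (p, q) * L t $$ (x, y) = 0 \<or> A b $$ (p, q) * L s $$ (x, y) = 0"
  proof (cases "a = b")
    case True
    then have "t \<noteq> s" using ij(3) at bs by auto
    then show ?thesis using disj_L at bs px qy unfolding disjoint_supports_def by auto
  next
    case False
    then show ?thesis using disj_A at bs px qy unfolding disjoint_supports_def by auto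
  qed
  moreover have "kron_family r2 A L i $$ (P, Q) = A a $$ (p, q) * L t $$ (x, y)"
    unfolding at(3) px(3) qy(3) using A L at px qy by (intro index_kron_family)
  moreover have "kron_family r2 A L j $$ (P, Q) = A b $$ (p, q) * L s $$ (x, y)"
    unfolding bs(3) px(3) qy(3) using A L bs px qy by (intro index_kron_family)
  ultimately show "kron_family r2 A L i $$ (P, Q) = 0 \<or> kron_family r2 A L j $$ (P, Q) = 0"
    by simp
qed

lemma kron_family_nonzero:
  assumes A: "\<forall>a<r1. A a \<in> carrier_mat d1 d1" and L: "\<forall>t<r2. L t \<in> carrier_mat d2 d2"
    and nonzero_A: "\<forall>a<r1. A a \<noteq> 0\<^sub>m d1 d1" and nonzero_L: "\<forall>t<r2. L t \<noteq> 0\<^sub>m d2 d2"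
  shows "\<forall>n<r1 * r2. kron_family r2 A L n \<noteq> 0\<^sub>m (d1 * d2) (d1 * d2)"
proof (intro allI impI notI)
  fix n assume n: "n < r1 * r2" and zero: "kron_family r2 A L n = 0\<^sub>m (d1 * d2) (d1 * d2)"
  obtain a t where at: "a < r1" "t < r2" "n = a * r2 + t" using n by (metis lessThan_mult_cases)
  obtain p q where pq: "p < d1" "q < d1" "A a $$ (p, q) \<noteq> 0"
    using nonzero_mat_entry A nonzero_A at by meson
  obtain x y where xy: "x < d2" "y < d2" "L t $$ (x, y) \<noteq> 0"
    using nonzero_mat_entry L nonzero_L at by meson
  have "kron_family r2 A L n $$ (p * d2 + x, q * d2 + y) = A a $$ (p, q) * L t $$ (x, y)"
    unfolding at(3) using A L at pq xy by (intro index_kron_family)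
  then show False using zero pq xy by (simp add: pair_index_less)
qed

lemma prods_adj_smult:
  assumes "K i \<in> carrier_mat d d" "K j \<in> carrier_mat d d"
  shows "prods_adj (\<lambda>n. e \<cdot>\<^sub>m K n) (i, j) = (e * cnj e) \<cdot>\<^sub>m prods_adj K (i, j)"
    and "adj_prods (\<lambda>n. e \<cdot>\<^sub>m K n) (i, j) = (e * cnj e) \<cdot>\<^sub>m adj_prods K (i, j)"
  using assms by (auto simp: prods_adj_def adj_prods_def scalar_prod_def sum_distrib_left mult_ac)

lemma sum_prods_adj_smult:
  assumes K: "\<forall>n<r. K n \<in> carrier_mat d d"
  shows "sum_prods_adj d r (\<lambda>n. e \<cdot>\<^sub>m K n) = (e * cnj e) \<cdot>\<^sub>m sum_prods_adj d r K"
    and "sum_adj_prods d r (\<lambda>n. e \<cdot>\<^sub>m K n) = (e * cnj e) \<cdot>\<^sub>m sum_adj_prods d r K"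
proof -
  have "prods_adj (\<lambda>n. e \<cdot>\<^sub>m K n) (n, n) $$ (p, q) = e * cnj e * prods_adj K (n, n) $$ (p, q)"
    "adj_prods (\<lambda>n. e \<cdot>\<^sub>m K n) (n, n) $$ (p, q) = e * cnj e * adj_prods K (n, n) $$ (p, q)"
    if "n < r" "p < d" "q < d" for n p q
  proof -
    have Kn: "K n \<in> carrier_mat d d" using K that by simp
    have "prods_adj K (n, n) \<in> carrier_mat d d" "adj_prods K (n, n) \<in> carrier_mat d d"
      using prods_adj_carrier[OF K] that by auto
    then show "prods_adj (\<lambda>n. e \<cdot>\<^sub>m K n) (n, n) $$ (p, q) = e * cnj e * prods_adj K (n, n) $$ (p, q)"
      "adj_prods (\<lambda>n. e \<cdot>\<^sub>m K n) (n, n) $$ (p, q) = e * cnj e * adj_prods K (n, n) $$ (p, q)"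
      using that by (auto simp: prods_adj_smult[of K n d n e, OF Kn Kn])
  qed
  then show "sum_prods_adj d r (\<lambda>n. e \<cdot>\<^sub>m K n) = (e * cnj e) \<cdot>\<^sub>m sum_prods_adj d r K"
    and "sum_adj_prods d r (\<lambda>n. e \<cdot>\<^sub>m K n) = (e * cnj e) \<cdot>\<^sub>m sum_adj_prods d r K"
    by (auto simp: sum_prods_adj_def sum_adj_prods_def sum_distrib_left intro!: sum.cong)
qed

lemma lin_indep_mats_cong:
  "(\<And>x. x \<in> I \<Longrightarrow> F x = F' x) \<Longrightarrow> lin_indep_mats d I F \<Longrightarrow> lin_indep_mats d I F'"
  using lin_indep_mats_reindex[OF bij_betw_id, of I F F' d] by simp

lemma lin_indep_mat_pairs_cong:
  "(\<And>x. x \<in> I \<Longrightarrow> F x = F' x) \<Longrightarrow> (\<And>x. x \<in> I \<Longrightarrow> G x = G' x) \<Longrightarrow>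
    lin_indep_mat_pairs d I F G \<Longrightarrow> lin_indep_mat_pairs d I F' G'"
  using lin_indep_mat_pairs_reindex[OF bij_betw_id, of I F F' G G' d] by simp

lemma lin_indep_prods_smult:
  assumes K: "\<forall>i<r. K i \<in> carrier_mat d d" and e: "e \<noteq> 0"
  shows "lin_indep_mats d ({..<r} \<times> {..<r}) (prods_adj K) \<Longrightarrow>
      lin_indep_mats d ({..<r} \<times> {..<r}) (prods_adj (\<lambda>n. e \<cdot>\<^sub>m K n))"
    and "lin_indep_mats d ({..<r} \<times> {..<r}) (adj_prods K) \<Longrightarrow>
      lin_indep_mats d ({..<r} \<times> {..<r}) (adj_prods (\<lambda>n. e \<cdot>\<^sub>m K n))"
    and "lin_indep_mat_pairs d ({..<r} \<times> {..<r}) (prods_adj K) (adj_prods K) \<Longrightarrow>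
      lin_indep_mat_pairs d ({..<r} \<times> {..<r}) (prods_adj (\<lambda>n. e \<cdot>\<^sub>m K n)) (adj_prods (\<lambda>n. e \<cdot>\<^sub>m K n))"
proof -
  have e': "\<forall>x\<in>{..<r} \<times> {..<r}. e * cnj e \<noteq> 0" using e by simp
  have scaled: "prods_adj (\<lambda>n. e \<cdot>\<^sub>m K n) x = (e * cnj e) \<cdot>\<^sub>m prods_adj K x"
    "adj_prods (\<lambda>n. e \<cdot>\<^sub>m K n) x = (e * cnj e) \<cdot>\<^sub>m adj_prods K x" if x: "x \<in> {..<r} \<times> {..<r}" for x
  proof -
    obtain i j where "x = (i, j)" "i < r" "j < r" using x by blast
    then show "prods_adj (\<lambda>n. e \<cdot>\<^sub>m K n) x = (e * cnj e) \<cdot>\<^sub>m prods_adj K x"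
      "adj_prods (\<lambda>n. e \<cdot>\<^sub>m K n) x = (e * cnj e) \<cdot>\<^sub>m adj_prods K x"
      using prods_adj_smult[of K i d j e] K by simp_all
  qed
  note carrier = prods_adj_carrier[OF K]
  show "lin_indep_mats d ({..<r} \<times> {..<r}) (prods_adj K) \<Longrightarrow>
      lin_indep_mats d ({..<r} \<times> {..<r}) (prods_adj (\<lambda>n. e \<cdot>\<^sub>m K n))"
    by (rule lin_indep_mats_cong[OF scaled(1)[symmetric] lin_indep_mats_smult[OF carrier(1) e']])
  show "lin_indep_mats d ({..<r} \<times> {..<r}) (adj_prods K) \<Longrightarrow>
      lin_indep_mats d ({..<r} \<times> {..<r}) (adj_prods (\<lambda>n. e \<cdot>\<^sub>m K n))"
    by (rule lin_indep_mats_cong[OF scaled(2)[symmetric] lin_indep_mats_smult[OF carrier(2) e']])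
  show "lin_indep_mat_pairs d ({..<r} \<times> {..<r}) (prods_adj K) (adj_prods K) \<Longrightarrow>
      lin_indep_mat_pairs d ({..<r} \<times> {..<r}) (prods_adj (\<lambda>n. e \<cdot>\<^sub>m K n)) (adj_prods (\<lambda>n. e \<cdot>\<^sub>m K n))"
    by (rule lin_indep_mat_pairs_cong[OF scaled(1)[symmetric] scaled(2)[symmetric] lin_indep_mat_pairs_smult[OF carrier e']])
qed

lemma disjoint_supports_smult:
  assumes "\<forall>n<r. K n \<in> carrier_mat d d" "disjoint_supports d r K"
  shows "disjoint_supports d r (\<lambda>n. e \<cdot>\<^sub>m K n)"
  unfolding disjoint_supports_def
proof (intro allI impI)
  fix i j p q assume "i < r" "j < r" "i \<noteq> j" "p < d" "q < d"
  moreover from this have "K i \<in> carrier_mat d d" "K j \<in> carrier_mat d d" using assms(1) by auto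
  ultimately show "(e \<cdot>\<^sub>m K i) $$ (p, q) = 0 \<or> (e \<cdot>\<^sub>m K j) $$ (p, q) = 0"
    using assms(2) unfolding disjoint_supports_def by auto
qed

lemma smult_nonzero_mat:
  fixes A :: "'a :: idom mat"
  assumes "A \<in> carrier_mat n m" "A \<noteq> 0\<^sub>m n m" "e \<noteq> 0"
  shows "e \<cdot>\<^sub>m A \<noteq> 0\<^sub>m n m"
proof
  assume zero: "e \<cdot>\<^sub>m A = 0\<^sub>m n m"
  obtain i j where "i < n" "j < m" "A $$ (i, j) \<noteq> 0" using nonzero_mat_entry assms(1,2) by blast
  moreover have "(e \<cdot>\<^sub>m A) $$ (i, j) = e * A $$ (i, j)" using assms(1) \<open>i < n\<close> \<open>j < m\<close> by auto
  ultimately show False using zero assms(3) by simp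
qed

lemma index_prods_adj:
  assumes "K i \<in> carrier_mat d d" "K j \<in> carrier_mat d d" "p < d" "q < d"
  shows "prods_adj K (i, j) $$ (p, q) = (\<Sum>m<d. K i $$ (p, m) * cnj (K j $$ (q, m)))"
    and "adj_prods K (i, j) $$ (p, q) = (\<Sum>m<d. cnj (K j $$ (m, p)) * K i $$ (m, q))"
  unfolding prods_adj_def adj_prods_def prod.case
  by (rule index_mult_mat_adjoint[OF assms], rule index_mat_adjoint_mult[OF assms])

lemma adj_prods_transpose:
  assumes "K i \<in> carrier_mat d d" "K j \<in> carrier_mat d d"
  shows "adj_prods K (i, j) = transpose_mat (prods_adj (\<lambda>n. transpose_mat (K n)) (i, j))"
proof (rule eq_matI)
  fix p q assume "p < dim_row (transpose_mat (prods_adj (\<lambda>n. transpose_mat (K n)) (i, j)))"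
    "q < dim_col (transpose_mat (prods_adj (\<lambda>n. transpose_mat (K n)) (i, j)))"
  then have pq: "p < d" "q < d" using assms by (simp_all add: prods_adj_def)
  have "transpose_mat (prods_adj (\<lambda>n. transpose_mat (K n)) (i, j)) $$ (p, q) =
      prods_adj (\<lambda>n. transpose_mat (K n)) (i, j) $$ (q, p)"
    using assms pq by (simp add: prods_adj_def)
  also have "\<dots> = (\<Sum>m<d. K i $$ (m, q) * cnj (K j $$ (m, p)))"
    using assms pq by (simp add: index_prods_adj)
  also have "\<dots> = adj_prods K (i, j) $$ (p, q)"
    using assms pq by (simp add: index_prods_adj mult.commute)
  finally show "adj_prods K (i, j) $$ (p, q) = transpose_mat (prods_adj (\<lambda>n. transpose_mat (K n)) (i, j)) $$ (p, q)" ..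
qed (use assms in \<open>simp_all add: prods_adj_def adj_prods_def\<close>)

lemma lin_indep_adj_prods_of_transpose:
  assumes K: "\<forall>i<r. K i \<in> carrier_mat d d"
    and indep: "lin_indep_mats d ({..<r} \<times> {..<r}) (prods_adj (\<lambda>n. transpose_mat (K n)))"
  shows "lin_indep_mats d ({..<r} \<times> {..<r}) (adj_prods K)"
proof (rule lin_indep_mats_cong[OF _ lin_indep_mats_transpose[OF _ indep]])
  show "transpose_mat (prods_adj (\<lambda>n. transpose_mat (K n)) x) = adj_prods K x" if x: "x \<in> {..<r} \<times> {..<r}" for x
  proof -
    obtain i j where "x = (i, j)" "i < r" "j < r" using x by blast
    then show ?thesis using adj_prods_transpose[of K i d j] K by simp
  qed
  show "\<forall>x\<in>{..<r} \<times> {..<r}. prods_adj (\<lambda>n. transpose_mat (K n)) x \<in> carrier_mat d d"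
    using prods_adj_carrier(1)[of r "\<lambda>n. transpose_mat (K n)"] K by simp
qed

(* Since (K_j^H K_i)^T = K_i^T (K_j^T)^H, for a family closed under transposition the
   conditions on adj_prods follow from those on prods_adj. *)
lemma transpose_closed_family:
  assumes K: "\<forall>i<r. K i \<in> carrier_mat d d" and \<sigma>: "bij_betw \<sigma> {..<r} {..<r}"
    and transpose: "\<And>i. i < r \<Longrightarrow> transpose_mat (K i) = K (\<sigma> i)"
  shows "lin_indep_mats d ({..<r} \<times> {..<r}) (prods_adj K) \<Longrightarrow> lin_indep_mats d ({..<r} \<times> {..<r}) (adj_prods K)"
    and "sum_adj_prods d r K = transpose_mat (sum_prods_adj d r K)"
proof -
  let ?KT = "\<lambda>n. transpose_mat (K n)"
  have KT: "\<forall>i<r. ?KT i \<in> carrier_mat d d" using K by simp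
  have prods: "prods_adj ?KT (i, j) = prods_adj K (\<sigma> i, \<sigma> j)" if "i < r" "j < r" for i j
    using that transpose by (simp add: prods_adj_def)
  define \<tau> where "\<tau> = inv_into {..<r} \<sigma>"
  have \<tau>: "bij_betw \<tau> {..<r} {..<r}" "\<And>i. i < r \<Longrightarrow> \<sigma> (\<tau> i) = i"
    using bij_betw_inv_into[OF \<sigma>] bij_betw_inv_into_right[OF \<sigma>] by (auto simp: \<tau>_def)
  show "lin_indep_mats d ({..<r} \<times> {..<r}) (adj_prods K)" if "lin_indep_mats d ({..<r} \<times> {..<r}) (prods_adj K)"
  proof (rule lin_indep_adj_prods_of_transpose[OF K lin_indep_mats_reindex[OF _ _ that]])
    show "bij_betw (\<lambda>(i, j). (\<tau> i, \<tau> j)) ({..<r} \<times> {..<r}) ({..<r} \<times> {..<r})"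
      using bij_betw_map_prod[OF \<tau>(1) \<tau>(1)] by (simp add: map_prod_def)
    show "\<forall>y\<in>{..<r} \<times> {..<r}. prods_adj K y = prods_adj ?KT (case y of (i, j) \<Rightarrow> (\<tau> i, \<tau> j))"
      using prods \<tau> bij_betw_apply[OF \<tau>(1)] by auto
  qed
  have "(\<Sum>n<r. adj_prods K (n, n) $$ (p, q)) = (\<Sum>n<r. prods_adj K (n, n) $$ (q, p))" if pq: "p < d" "q < d" for p q
  proof -
    have "(\<Sum>n<r. adj_prods K (n, n) $$ (p, q)) = (\<Sum>n<r. prods_adj K (\<sigma> n, \<sigma> n) $$ (q, p))"
    proof (intro sum.cong refl)
      fix n assume "n \<in> {..<r}"
      then have "adj_prods K (n, n) = transpose_mat (prods_adj ?KT (n, n))" "prods_adj ?KT (n, n) \<in> carrier_mat d d"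
        using K prods_adj_carrier(1)[OF KT] by (auto intro: adj_prods_transpose)
      then show "adj_prods K (n, n) $$ (p, q) = prods_adj K (\<sigma> n, \<sigma> n) $$ (q, p)"
        using pq prods \<open>n \<in> {..<r}\<close> by auto
    qed
    also have "\<dots> = (\<Sum>n<r. prods_adj K (n, n) $$ (q, p))"
      by (rule sum.reindex_bij_betw[OF \<sigma>])
    finally show ?thesis .
  qed
  then show "sum_adj_prods d r K = transpose_mat (sum_prods_adj d r K)"
    by (auto simp: sum_adj_prods_def sum_prods_adj_def)
qed

subsection \<open>The three factors\<close>

lemma sum_pairs: "(\<Sum>x\<in>{..<n} \<times> {..<n}. f x) = (\<Sum>i<n. \<Sum>j<n. f (i, j))"
  by (simp add: sum.cartesian_product)

lemma sqrt_scalar_norm: "0 \<le> a \<Longrightarrow> complex_of_real (sqrt a) * cnj (complex_of_real (sqrt a)) = complex_of_real a"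
  by (simp flip: of_real_mult)

lemma less_3_cases_iff: "(n :: nat) < 3 \<longleftrightarrow> n = 0 \<or> n = 1 \<or> n = 2"
  by auto

lemma less_4_cases_iff: "(n :: nat) < 4 \<longleftrightarrow> n = 0 \<or> n = 1 \<or> n = 2 \<or> n = 3"
  by auto

lemma pair_eq_0_of_swap_system:
  fixes a b r :: complex
  assumes "a + r * b = 0" "r * a + b = 0" "r * r \<noteq> 1"
  shows "a = 0" "b = 0"
proof -
  have "b = - (r * a)" using assms(2) by (simp add: eq_neg_iff_add_eq_0 add.commute)
  then have "(1 - r * r) * a = 0" using assms(1) by (simp add: algebra_simps)
  then show "a = 0" using assms(3) by simp
  then show "b = 0" using assms(2) by simp
qed

lemma sum_two_deltas:
  fixes a b k :: nat
  shows "(\<Sum>m<k. (if m = a then e else 0) + (if m = b then e' else 0)) =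
    (if a < k then e else 0) + (if b < k then e' else (0 :: complex))"
  by (simp add: sum.distrib sum.delta)

lemma double_sum_two_terms:
  fixes a b a' b' k :: nat and z :: "nat \<times> nat \<Rightarrow> complex"
  assumes "a < k" "b < k" "a' < k" "b' < k"
    and P: "\<And>t u. t < k \<Longrightarrow> u < k \<Longrightarrow>
      P t u = (if t = a \<and> u = b then e else 0) + (if t = a' \<and> u = b' then e' else 0)"
  shows "(\<Sum>t<k. \<Sum>u<k. z (t, u) * P t u) = z (a, b) * e + z (a', b') * e'"
proof -
  have "(\<Sum>t<k. \<Sum>u<k. z (t, u) * P t u) =
      (\<Sum>x\<in>{..<k} \<times> {..<k}. (if x = (a, b) then z (a, b) * e else 0) + (if x = (a', b') then z (a', b') * e' else 0))"
    unfolding sum_pairs using P by (intro sum.cong refl) (auto simp: distrib_left)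
  also have "\<dots> = z (a, b) * e + z (a', b') * e'"
    using assms(1-4) by (simp add: sum.distrib sum.delta')
  finally show ?thesis .
qed

lemma head_eq_0_of_sum_eq_0:
  fixes f :: "nat \<Rightarrow> complex"
  assumes k: "3 \<le> k" and others: "\<And>x. 1 \<le> x \<Longrightarrow> x < k \<Longrightarrow> f x = - (of_nat (k - 1) * f 0)"
    and sum: "(\<Sum>t<k. f t) = 0"
  shows "f 0 = 0"
proof -
  define m where "m = (of_nat (k - 1) :: complex)"
  have "0 = f 0 + (\<Sum>t\<in>{1..<k}. f t)"
    using sum k by (simp add: atLeast0LessThan[symmetric] sum.atLeast_Suc_lessThan)
  also have "(\<Sum>t\<in>{1..<k}. f t) = (\<Sum>t\<in>{1..<k}. - (m * f 0))"
    using others by (intro sum.cong) (auto simp: m_def)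
  also have "\<dots> = - (m * (m * f 0))"
    using k by (simp add: m_def of_nat_diff)
  also have "f 0 + \<dots> = f 0 * (1 - m * m)"
    by (simp add: algebra_simps)
  finally have "f 0 * (1 - m * m) = 0" ..
  moreover have "2 * 2 \<le> (k - 1) * (k - 1)" using k by (intro mult_le_mono) auto
  then have "(k - 1) * (k - 1) \<noteq> 1" by linarith
  then have "m * m \<noteq> 1" unfolding m_def by (metis of_nat_1 of_nat_eq_iff of_nat_mult)
  ultimately show ?thesis by simp
qed

definition qubit_family :: "nat \<Rightarrow> complex mat" where
  "qubit_family p = mat 2 2 (\<lambda>(i, j). if p = 0 then of_bool (i = 1 \<and> j = 1) else of_bool (i \<noteq> j))"

lemma qubit_family_carrier [simp]: "qubit_family p \<in> carrier_mat 2 2"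
  by (simp add: qubit_family_def)

lemma lin_indep_prods_qubit: "lin_indep_mats 2 ({..<2} \<times> {..<2}) (prods_adj qubit_family)"
  unfolding lin_indep_mats_def
proof (intro allI impI ballI)
  fix c :: "nat \<times> nat \<Rightarrow> complex" and x :: "nat \<times> nat"
  assume zero: "\<forall>p<2. \<forall>q<2. (\<Sum>x\<in>{..<2} \<times> {..<2}. c x * prods_adj qubit_family x $$ (p, q)) = 0"
    and x: "x \<in> {..<2} \<times> {..<2}"
  have "(\<Sum>i<2. \<Sum>j<2. c (i, j) * (\<Sum>m<2. qubit_family i $$ (p, m) * cnj (qubit_family j $$ (q, m)))) = 0"
    if "p < 2" "q < 2" for p q
    using zero that by (simp add: sum_pairs index_prods_adj[where d = 2])
  from this[of 0 0] this[of 1 1] this[of 1 0] this[of 0 1]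
  have "c (1, 1) = 0" "c (0, 0) + c (1, 1) = 0" "c (0, 1) = 0" "c (1, 0) = 0"
    by (simp_all add: eval_nat_numeral qubit_family_def)
  then show "c x = 0" using x by (auto simp: less_2_cases_iff)
qed

lemma lin_indep_adj_prods_qubit: "lin_indep_mats 2 ({..<2} \<times> {..<2}) (adj_prods qubit_family)"
proof (rule lin_indep_adj_prods_of_transpose)
  have "transpose_mat (qubit_family n) = qubit_family n" for n
    by (auto simp: qubit_family_def)
  then show "lin_indep_mats 2 ({..<2} \<times> {..<2}) (prods_adj (\<lambda>n. transpose_mat (qubit_family n)))"
    using lin_indep_prods_qubit by simp
qed simp

lemma sum_prods_adj_qubit:
  "sum_prods_adj 2 2 qubit_family = mat 2 2 (\<lambda>(i, j). if i = j then of_nat (i + 1) else 0)"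
  "sum_adj_prods 2 2 qubit_family = mat 2 2 (\<lambda>(i, j). if i = j then of_nat (i + 1) else 0)"
  by (auto simp: sum_prods_adj_def sum_adj_prods_def index_prods_adj[where d = 2] eval_nat_numeral
      qubit_family_def less_2_cases_iff)

lemma disjoint_supports_qubit: "disjoint_supports 2 2 qubit_family"
  by (auto simp: disjoint_supports_def qubit_family_def less_2_cases_iff)

lemma qubit_family_nonzero: "qubit_family p \<noteq> 0\<^sub>m 2 2"
proof
  assume "qubit_family p = 0\<^sub>m 2 2"
  then have "qubit_family p $$ (1, 1) = 0" "qubit_family p $$ (0, 1) = 0" by simp_all
  then show False by (simp add: qubit_family_def split: if_splits)
qed

definition qutrit_family :: "nat \<Rightarrow> complex mat" where
  "qutrit_family c = mat 3 3 (\<lambda>(i, j).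
     if c = 0 then of_bool ((i = 0 \<and> j = 0) \<or> (i = 2 \<and> j = 2))
     else if c = 1 then of_bool (i = 1 \<and> j = 0)
     else if c = 2 then (if i = 0 \<and> j = 1 then complex_of_real (sqrt 2) else of_bool (i = 2 \<and> j = 0))
     else (if i = 1 \<and> j = 2 then complex_of_real (sqrt 2) else of_bool (i = 2 \<and> j = 1)))"

lemma qutrit_family_carrier [simp]: "qutrit_family c \<in> carrier_mat 3 3"
  by (simp add: qutrit_family_def)

lemma pairs_indep_qutrit:
  "lin_indep_mat_pairs 3 ({..<4} \<times> {..<4}) (prods_adj qutrit_family) (adj_prods qutrit_family)"
  unfolding lin_indep_mat_pairs_def
proof (intro allI impI ballI, elim conjE)
  fix c :: "nat \<times> nat \<Rightarrow> complex" and x :: "nat \<times> nat"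
  assume zero_P: "\<forall>p<3. \<forall>q<3. (\<Sum>x\<in>{..<4} \<times> {..<4}. c x * prods_adj qutrit_family x $$ (p, q)) = 0"
    and zero_Q: "\<forall>p<3. \<forall>q<3. (\<Sum>x\<in>{..<4} \<times> {..<4}. c x * adj_prods qutrit_family x $$ (p, q)) = 0"
    and x: "x \<in> {..<4} \<times> {..<4}"
  obtain r2 :: complex where r2: "complex_of_real (sqrt 2) = r2" "r2 * r2 = 2" "cnj r2 = r2"
    by (simp flip: of_real_mult)
  have r2_ne_1: "r2 * r2 \<noteq> 1" using r2(2) by simp
  have r2_cancel [simp]: "r2 * (r2 * z) = 2 * z" for z
    using r2(2) by (simp flip: mult.assoc)
  have P: "(\<Sum>i<4. \<Sum>j<4. c (i, j) * (\<Sum>m<3. qutrit_family i $$ (p, m) * cnj (qutrit_family j $$ (q, m)))) = 0"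
    if "p < 3" "q < 3" for p q
    using zero_P that by (simp add: sum_pairs index_prods_adj[where d = 3])
  have Q: "(\<Sum>i<4. \<Sum>j<4. c (i, j) * (\<Sum>m<3. cnj (qutrit_family j $$ (m, p)) * qutrit_family i $$ (m, q))) = 0"
    if "p < 3" "q < 3" for p q
    using zero_Q that by (simp add: sum_pairs index_prods_adj[where d = 3])
  note evaluate = eval_nat_numeral qutrit_family_def r2 mult_ac
  have P00: "c (0, 0) + 2 * c (2, 2) = 0" using P[of 0 0] by (simp add: evaluate)
  have P11: "c (1, 1) + 2 * c (3, 3) = 0" using P[of 1 1] by (simp add: evaluate)
  have P12: "c (1, 2) + r2 * c (3, 0) = 0" using P[of 1 2] by (simp add: evaluate)
  have P21: "r2 * c (0, 3) + c (2, 1) = 0" using P[of 2 1] by (simp add: evaluate)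
  have P02: "c (0, 2) + r2 * c (2, 3) = 0" using P[of 0 2] by (simp add: evaluate)
  have P20: "c (2, 0) + r2 * c (3, 2) = 0" using P[of 2 0] by (simp add: evaluate)
  have Q01: "r2 * c (2, 0) + c (3, 2) = 0" using Q[of 0 1] by (simp add: evaluate)
  have Q02: "c (0, 2) + r2 * c (3, 1) = 0" using Q[of 0 2] by (simp add: evaluate)
  have Q10: "r2 * c (0, 2) + c (2, 3) = 0" using Q[of 1 0] by (simp add: evaluate)
  have Q11: "2 * c (2, 2) + c (3, 3) = 0" using Q[of 1 1] by (simp add: evaluate)
  have Q20: "r2 * c (1, 3) + c (2, 0) = 0" using Q[of 2 0] by (simp add: evaluate)
  have Q22: "c (0, 0) + 2 * c (3, 3) = 0" using Q[of 2 2] by (simp add: evaluate)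
  have "c (0, 1) = 0" using P[of 0 1] by (simp add: evaluate)
  moreover have "c (1, 0) = 0" using P[of 1 0] by (simp add: evaluate)
  moreover have "c (0, 3) = 0" using Q[of 1 2] by (simp add: evaluate)
  moreover have "c (3, 0) = 0" using Q[of 2 1] by (simp add: evaluate)
  moreover have "c (0, 2) = 0" "c (2, 3) = 0" using pair_eq_0_of_swap_system[OF P02 Q10 r2_ne_1] by simp_all
  moreover have "c (2, 0) = 0" "c (3, 2) = 0" using pair_eq_0_of_swap_system[OF P20 Q01 r2_ne_1] by simp_all
  moreover have "c (2, 2) = 0" using P00 Q11 Q22 by (simp add: eq_neg_iff_add_eq_0[symmetric])
  ultimately show "c x = 0" using x P11 P12 P21 Q02 Q11 Q20 P00 r2(2)
    by (auto simp: less_4_cases_iff)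
qed

lemma sum_prods_adj_qutrit:
  "sum_prods_adj 3 4 qutrit_family = 3 \<cdot>\<^sub>m 1\<^sub>m 3"
  "sum_adj_prods 3 4 qutrit_family = 3 \<cdot>\<^sub>m 1\<^sub>m 3"
proof -
  have [simp]: "complex_of_real (sqrt 2) * complex_of_real (sqrt 2) = 2" by (simp flip: of_real_mult)
  show "sum_prods_adj 3 4 qutrit_family = 3 \<cdot>\<^sub>m 1\<^sub>m 3" "sum_adj_prods 3 4 qutrit_family = 3 \<cdot>\<^sub>m 1\<^sub>m 3"
    by (auto simp: sum_prods_adj_def sum_adj_prods_def index_prods_adj[where d = 3] eval_nat_numeral
        qutrit_family_def less_3_cases_iff)
qed

lemma disjoint_supports_qutrit: "disjoint_supports 3 4 qutrit_family"
  by (auto simp: disjoint_supports_def qutrit_family_def less_3_cases_iff less_4_cases_iff)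

lemma qutrit_family_nonzero: "qutrit_family c \<noteq> 0\<^sub>m 3 3"
proof
  assume "qutrit_family c = 0\<^sub>m 3 3"
  then have "qutrit_family c $$ (0, 0) = 0" "qutrit_family c $$ (1, 0) = 0" "qutrit_family c $$ (2, 0) = 0"
    "qutrit_family c $$ (2, 1) = 0" by simp_all
  then show False by (simp add: qutrit_family_def split: if_splits)
qed

definition qudit_diag :: "nat \<Rightarrow> nat \<Rightarrow> complex" where
  "qudit_diag k x = (if x = 0 then 1 else complex_of_real (sqrt (real k - 1)))"

definition qudit_family :: "nat \<Rightarrow> nat \<Rightarrow> complex mat" where
  "qudit_family k t = mat k k (\<lambda>(x, y).
     if t = 0 then (if x = y then qudit_diag k x else 0)
     else (if x = 0 \<and> y = k - t then 1 else 0) + (if x = t \<and> y = 0 then 1 else 0))"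

lemma qudit_family_carrier [simp]: "qudit_family k t \<in> carrier_mat k k"
  by (simp add: qudit_family_def)

lemma cnj_qudit_diag [simp]: "cnj (qudit_diag k x) = qudit_diag k x"
  by (simp add: qudit_diag_def)

lemma qudit_diag_sq: "1 \<le> x \<Longrightarrow> 1 \<le> k \<Longrightarrow> qudit_diag k x * qudit_diag k x = of_nat k - 1"
  by (simp add: qudit_diag_def of_nat_diff flip: of_real_mult)

lemma index_prods_adj_qudit:
  assumes tu: "t < k" "u < k" and xy: "x < k" "y < k"
  shows "prods_adj (qudit_family k) (t, u) $$ (x, y) =
   (if t = 0 then (if u = 0 then (if x = y then qudit_diag k x * qudit_diag k x else 0)
      else (if y = 0 \<and> x = k - u then qudit_diag k x else 0) + (if y = u \<and> x = 0 then qudit_diag k x else 0))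
    else if u = 0 then (if x = 0 \<and> y = k - t then qudit_diag k y else 0) + (if x = t \<and> y = 0 then qudit_diag k y else 0)
    else (if x = t \<and> y = u then 1 else 0) + (if x = 0 \<and> y = 0 \<and> t = u then 1 else 0))"
  (is "_ = ?R")
proof -
  let ?L = "\<lambda>t x y. qudit_family k t $$ (x, y)"
  have "prods_adj (qudit_family k) (t, u) $$ (x, y) = (\<Sum>m<k. ?L t x m * cnj (?L u y m))"
    using xy by (simp add: index_prods_adj[where d = k])
  also have "\<dots> = ?R"
  proof (cases "t = 0"; cases "u = 0")
    assume "t = 0" "u = 0"
    then have "(\<Sum>m<k. ?L t x m * cnj (?L u y m)) =
        (\<Sum>m<k. (if m = x then (if x = y then qudit_diag k x * qudit_diag k x else 0) else 0) + (if m = 0 then 0 else 0))"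
      using xy by (intro sum.cong refl) (auto simp: qudit_family_def)
    then show ?thesis using \<open>t = 0\<close> \<open>u = 0\<close> xy by (simp only: sum_two_deltas) simp
  next
    assume "t = 0" "u \<noteq> 0"
    then have "(\<Sum>m<k. ?L t x m * cnj (?L u y m)) =
        (\<Sum>m<k. (if m = x then (if y = 0 \<and> x = k - u then qudit_diag k x else 0) +
          (if y = u \<and> x = 0 then qudit_diag k x else 0) else 0) + (if m = 0 then 0 else 0))"
      using xy by (intro sum.cong refl) (auto simp: qudit_family_def)
    then show ?thesis using \<open>t = 0\<close> \<open>u \<noteq> 0\<close> xy by (simp only: sum_two_deltas) simp
  next
    assume "t \<noteq> 0" "u = 0"
    then have "(\<Sum>m<k. ?L t x m * cnj (?L u y m)) =
        (\<Sum>m<k. (if m = y then (if x = 0 \<and> y = k - t then qudit_diag k y else 0) +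
          (if x = t \<and> y = 0 then qudit_diag k y else 0) else 0) + (if m = 0 then 0 else 0))"
      using xy by (intro sum.cong refl) (auto simp: qudit_family_def)
    then show ?thesis using \<open>t \<noteq> 0\<close> \<open>u = 0\<close> xy by (simp only: sum_two_deltas) simp
  next
    assume "t \<noteq> 0" "u \<noteq> 0"
    then have "(\<Sum>m<k. ?L t x m * cnj (?L u y m)) =
        (\<Sum>m<k. (if m = 0 then (if x = t \<and> y = u then 1 else 0) else 0) +
          (if m = k - t then (if x = 0 \<and> y = 0 \<and> t = u then 1 else 0) else 0))"
      using tu xy by (intro sum.cong refl) (auto simp: qudit_family_def)
    then show ?thesis using \<open>t \<noteq> 0\<close> \<open>u \<noteq> 0\<close> xy tu by (simp only: sum_two_deltas) simp
  qed
  finally show ?thesis .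
qed

lemma qudit_combination_entries:
  fixes c :: "nat \<times> nat \<Rightarrow> complex"
  assumes x: "1 \<le> x" "x < k"
  shows "y < k \<Longrightarrow> 1 \<le> y \<Longrightarrow> x \<noteq> y \<Longrightarrow>
      (\<Sum>t<k. \<Sum>u<k. c (t, u) * prods_adj (qudit_family k) (t, u) $$ (x, y)) = c (x, y)"
    and "(\<Sum>t<k. \<Sum>u<k. c (t, u) * prods_adj (qudit_family k) (t, u) $$ (x, x)) =
      c (x, x) + c (0, 0) * (of_nat k - 1)"
    and "(\<Sum>t<k. \<Sum>u<k. c (t, u) * prods_adj (qudit_family k) (t, u) $$ (x, 0)) =
      c (x, 0) + c (0, k - x) * qudit_diag k x"
    and "(\<Sum>t<k. \<Sum>u<k. c (t, u) * prods_adj (qudit_family k) (t, u) $$ (0, x)) =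
      c (0, x) + c (k - x, 0) * qudit_diag k x"
proof -
  show "(\<Sum>t<k. \<Sum>u<k. c (t, u) * prods_adj (qudit_family k) (t, u) $$ (x, y)) = c (x, y)"
    if "y < k" "1 \<le> y" "x \<noteq> y"
  proof -
    have "(\<Sum>t<k. \<Sum>u<k. c (t, u) * prods_adj (qudit_family k) (t, u) $$ (x, y)) = c (x, y) * 1 + c (x, y) * 0"
      using x that by (intro double_sum_two_terms) (auto simp: index_prods_adj_qudit)
    then show ?thesis by simp
  qed
  show "(\<Sum>t<k. \<Sum>u<k. c (t, u) * prods_adj (qudit_family k) (t, u) $$ (x, x)) =
      c (x, x) + c (0, 0) * (of_nat k - 1)"
  proof -
    have "(\<Sum>t<k. \<Sum>u<k. c (t, u) * prods_adj (qudit_family k) (t, u) $$ (x, x)) =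
        c (x, x) * 1 + c (0, 0) * (of_nat k - 1)"
      using x by (intro double_sum_two_terms) (auto simp: index_prods_adj_qudit qudit_diag_sq)
    then show ?thesis by simp
  qed
  show "(\<Sum>t<k. \<Sum>u<k. c (t, u) * prods_adj (qudit_family k) (t, u) $$ (x, 0)) =
      c (x, 0) + c (0, k - x) * qudit_diag k x"
  proof -
    have "(\<Sum>t<k. \<Sum>u<k. c (t, u) * prods_adj (qudit_family k) (t, u) $$ (x, 0)) =
        c (x, 0) * 1 + c (0, k - x) * qudit_diag k x"
      using x by (intro double_sum_two_terms) (auto simp: index_prods_adj_qudit qudit_diag_def)
    then show ?thesis by simp
  qed
  show "(\<Sum>t<k. \<Sum>u<k. c (t, u) * prods_adj (qudit_family k) (t, u) $$ (0, x)) =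
      c (0, x) + c (k - x, 0) * qudit_diag k x"
  proof -
    have "(\<Sum>t<k. \<Sum>u<k. c (t, u) * prods_adj (qudit_family k) (t, u) $$ (0, x)) =
        c (0, x) * 1 + c (k - x, 0) * qudit_diag k x"
      using x by (intro double_sum_two_terms) (auto simp: index_prods_adj_qudit qudit_diag_def)
    then show ?thesis by simp
  qed
qed

lemma qudit_combination_entry_0_0:
  "(\<Sum>t<k. \<Sum>u<k. c (t, u) * prods_adj (qudit_family k) (t, u) $$ (0, 0)) = (\<Sum>t<k. c (t, t))"
proof -
  have "(\<Sum>t<k. \<Sum>u<k. c (t, u) * prods_adj (qudit_family k) (t, u) $$ (0, 0)) =
      (\<Sum>t<k. \<Sum>u<k. if u = t then c (t, t) else 0)"
    by (intro sum.cong refl) (auto simp: index_prods_adj_qudit qudit_diag_def)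
  then show ?thesis by simp
qed

lemma qudit_diag_sq_ne_1:
  assumes "3 \<le> k" "1 \<le> x"
  shows "qudit_diag k x * qudit_diag k x \<noteq> 1"
proof
  assume "qudit_diag k x * qudit_diag k x = 1"
  then have "of_nat (k - 1) = (of_nat 1 :: complex)" using assms qudit_diag_sq[of x k] by (simp add: of_nat_diff)
  then have "k - 1 = 1" by (simp only: of_nat_eq_iff)
  then show False using assms by simp
qed

lemma lin_indep_prods_qudit:
  assumes k: "3 \<le> k"
  shows "lin_indep_mats k ({..<k} \<times> {..<k}) (prods_adj (qudit_family k))"
  unfolding lin_indep_mats_def
proof (intro allI impI ballI)
  fix c :: "nat \<times> nat \<Rightarrow> complex" and z :: "nat \<times> nat"
  assume zero: "\<forall>p<k. \<forall>q<k. (\<Sum>x\<in>{..<k} \<times> {..<k}. c x * prods_adj (qudit_family k) x $$ (p, q)) = 0"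
    and z: "z \<in> {..<k} \<times> {..<k}"
  have S: "(\<Sum>t<k. \<Sum>u<k. c (t, u) * prods_adj (qudit_family k) (t, u) $$ (p, q)) = 0" if "p < k" "q < k" for p q
    using zero that by (simp add: sum_pairs)
  have off_diag: "c (x, y) = 0" if "1 \<le> x" "x < k" "1 \<le> y" "y < k" "x \<noteq> y" for x y
    using S[of x y] qudit_combination_entries(1)[of x k y c] that by simp
  have border: "c (x, 0) = 0" "c (0, k - x) = 0" if x: "1 \<le> x" "x < k" for x
  proof -
    have kx: "1 \<le> k - x" "k - x < k" using x by auto
    have "qudit_diag k (k - x) = qudit_diag k x" using x kx by (simp add: qudit_diag_def)
    then have "c (x, 0) + qudit_diag k x * c (0, k - x) = 0" "qudit_diag k x * c (x, 0) + c (0, k - x) = 0"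
      using S[of x 0] S[of 0 "k - x"] qudit_combination_entries(3)[OF x, of c]
        qudit_combination_entries(4)[OF kx, of c] x by (simp_all add: mult.commute add.commute)
    then show "c (x, 0) = 0" "c (0, k - x) = 0"
      using pair_eq_0_of_swap_system qudit_diag_sq_ne_1[OF k x(1)] by blast+
  qed
  have diag: "c (x, x) = - (of_nat (k - 1) * c (0, 0))" if "1 \<le> x" "x < k" for x
    using S[of x x] qudit_combination_entries(2)[OF that, of c] that k
    by (simp add: of_nat_diff eq_neg_iff_add_eq_0 mult.commute)
  have c00: "c (0, 0) = 0"
    using head_eq_0_of_sum_eq_0[OF k, of "\<lambda>t. c (t, t)"] diag S[of 0 0] k by (simp add: qudit_combination_entry_0_0)
  obtain x y where xy: "z = (x, y)" "x < k" "y < k" using z by blast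
  show "c z = 0"
  proof (cases "x = 0"; cases "y = 0")
    assume "x \<noteq> 0" "y \<noteq> 0"
    then show ?thesis using xy off_diag diag c00 by (cases "x = y") auto
  next
    assume "x = 0" "y \<noteq> 0"
    then show ?thesis using xy border(2)[of "k - y"] by auto
  qed (use xy border(1) c00 in auto)
qed

definition qudit_mirror :: "nat \<Rightarrow> nat \<Rightarrow> nat" where
  "qudit_mirror k t = (if t = 0 then 0 else k - t)"

lemma bij_betw_qudit_mirror: "bij_betw (qudit_mirror k) {..<k} {..<k}"
  by (rule bij_betw_byWitness[where f' = "qudit_mirror k"]) (auto simp: qudit_mirror_def)

lemma transpose_qudit_family: "t < k \<Longrightarrow> transpose_mat (qudit_family k t) = qudit_family k (qudit_mirror k t)"
  by (auto simp: qudit_family_def qudit_mirror_def)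

lemma lin_indep_adj_prods_qudit: "3 \<le> k \<Longrightarrow> lin_indep_mats k ({..<k} \<times> {..<k}) (adj_prods (qudit_family k))"
  by (rule transpose_closed_family(1)[OF _ bij_betw_qudit_mirror transpose_qudit_family lin_indep_prods_qudit]) simp_all

lemma sum_prods_adj_qudit:
  assumes k: "1 \<le> k"
  shows "sum_prods_adj k k (qudit_family k) = of_nat k \<cdot>\<^sub>m 1\<^sub>m k"
    and "sum_adj_prods k k (qudit_family k) = of_nat k \<cdot>\<^sub>m 1\<^sub>m k"
proof -
  have "(\<Sum>t<k. prods_adj (qudit_family k) (t, t) $$ (x, y)) = (if x = y then of_nat k else 0)"
    if xy: "x < k" "y < k" for x y
  proof -
    have "(\<Sum>t<k. prods_adj (qudit_family k) (t, t) $$ (x, y)) =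
        (\<Sum>t<k. (if t = 0 then (if x = y then qudit_diag k x * qudit_diag k x else 0) else 0)
          + (if t = x then (if x = y \<and> x \<noteq> 0 then 1 else 0) else 0)
          + (if x = 0 \<and> y = 0 then 1 else 0) - (if t = 0 then (if x = 0 \<and> y = 0 then 1 else 0) else 0))"
      using xy by (intro sum.cong refl) (auto simp: index_prods_adj_qudit)
    also have "\<dots> = (if x = y then qudit_diag k x * qudit_diag k x else 0) + (if x = y \<and> x \<noteq> 0 then 1 else 0)
        + of_nat k * (if x = 0 \<and> y = 0 then 1 else 0) - (if x = 0 \<and> y = 0 then 1 else 0)"
      using xy k by (simp add: sum.distrib sum_subtractf)
    also have "\<dots> = (if x = y then of_nat k else 0)"
      using k qudit_diag_sq[of x k] by (auto simp: qudit_diag_def)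
    finally show ?thesis .
  qed
  then show sum: "sum_prods_adj k k (qudit_family k) = of_nat k \<cdot>\<^sub>m 1\<^sub>m k"
    by (auto simp: sum_prods_adj_def)
  have "sum_adj_prods k k (qudit_family k) = transpose_mat (sum_prods_adj k k (qudit_family k))"
    by (rule transpose_closed_family(2)[where K = "qudit_family k", OF _ bij_betw_qudit_mirror transpose_qudit_family]) simp
  then show "sum_adj_prods k k (qudit_family k) = of_nat k \<cdot>\<^sub>m 1\<^sub>m k"
    using sum by auto
qed

lemma disjoint_supports_qudit: "disjoint_supports k k (qudit_family k)"
  by (auto simp: disjoint_supports_def qudit_family_def)

lemma qudit_family_nonzero:
  assumes "t < k"
  shows "qudit_family k t \<noteq> 0\<^sub>m k k"
proof
  assume zero: "qudit_family k t = 0\<^sub>m k k"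
  show False
  proof (cases "t = 0")
    case True
    then have "qudit_family k t $$ (0, 0) = 1" using assms by (simp add: qudit_family_def qudit_diag_def)
    then show False using zero assms by simp
  next
    case False
    then have "qudit_family k t $$ (t, 0) = 1" using assms by (simp add: qudit_family_def)
    then show False using zero assms by simp
  qed
qed

(* The scalars make sum K K^H = sum K^H K equal to the tensor factors sigma, I/3 and I/k of D1. *)
definition qubit_kraus :: "nat \<Rightarrow> complex mat" where
  "qubit_kraus p = complex_of_real (sqrt (1 / 3)) \<cdot>\<^sub>m qubit_family p"

definition qutrit_kraus :: "nat \<Rightarrow> complex mat" where
  "qutrit_kraus c = (1 / 3) \<cdot>\<^sub>m qutrit_family c"

definition qudit_kraus :: "nat \<Rightarrow> nat \<Rightarrow> complex mat" where
  "qudit_kraus k t = (1 / of_nat k) \<cdot>\<^sub>m qudit_family k t"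

definition channel_kraus :: "nat \<Rightarrow> nat \<Rightarrow> complex mat" where
  "channel_kraus k = kron_family k (kron_family 4 qubit_kraus qutrit_kraus) (qudit_kraus k)"

lemma qubit_kraus_properties:
  "\<forall>p<2. qubit_kraus p \<in> carrier_mat 2 2"
  "lin_indep_mats 2 ({..<2} \<times> {..<2}) (prods_adj qubit_kraus)"
  "lin_indep_mats 2 ({..<2} \<times> {..<2}) (adj_prods qubit_kraus)"
  "sum_prods_adj 2 2 qubit_kraus = sigma_mat"
  "sum_adj_prods 2 2 qubit_kraus = sigma_mat"
  "disjoint_supports 2 2 qubit_kraus"
  "\<forall>p<2. qubit_kraus p \<noteq> 0\<^sub>m 2 2"
proof -
  let ?e = "complex_of_real (sqrt (1 / 3))"
  have K: "\<forall>p<2. qubit_family p \<in> carrier_mat 2 2" and e: "?e \<noteq> 0" by simp_all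
  have "?e * cnj ?e = complex_of_real (1 / 3)" by (rule sqrt_scalar_norm) simp
  then have e_norm: "?e * cnj ?e = 1 / 3" by simp
  have sigma: "(1 / 3) \<cdot>\<^sub>m mat 2 2 (\<lambda>(i, j). if i = j then of_nat (i + 1) else 0) = sigma_mat"
    by (rule eq_matI) (auto simp: sigma_mat_def less_2_cases_iff)
  show "\<forall>p<2. qubit_kraus p \<in> carrier_mat 2 2" by (simp add: qubit_kraus_def)
  show "lin_indep_mats 2 ({..<2} \<times> {..<2}) (prods_adj qubit_kraus)"
    using lin_indep_prods_smult(1)[OF K e lin_indep_prods_qubit] by (simp add: qubit_kraus_def[abs_def])
  show "lin_indep_mats 2 ({..<2} \<times> {..<2}) (adj_prods qubit_kraus)"
    using lin_indep_prods_smult(2)[OF K e lin_indep_adj_prods_qubit] by (simp add: qubit_kraus_def[abs_def])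
  show "sum_prods_adj 2 2 qubit_kraus = sigma_mat" "sum_adj_prods 2 2 qubit_kraus = sigma_mat"
    unfolding qubit_kraus_def[abs_def] sum_prods_adj_smult[OF K] e_norm sum_prods_adj_qubit sigma by simp_all
  show "disjoint_supports 2 2 qubit_kraus"
    using disjoint_supports_smult[OF K disjoint_supports_qubit] by (simp add: qubit_kraus_def[abs_def])
  show "\<forall>p<2. qubit_kraus p \<noteq> 0\<^sub>m 2 2"
    using smult_nonzero_mat[OF _ qubit_family_nonzero e] by (simp add: qubit_kraus_def)
qed

lemma qutrit_kraus_properties:
  "\<forall>c<4. qutrit_kraus c \<in> carrier_mat 3 3"
  "lin_indep_mat_pairs 3 ({..<4} \<times> {..<4}) (prods_adj qutrit_kraus) (adj_prods qutrit_kraus)"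
  "sum_prods_adj 3 4 qutrit_kraus = (1 / 3) \<cdot>\<^sub>m 1\<^sub>m 3"
  "sum_adj_prods 3 4 qutrit_kraus = (1 / 3) \<cdot>\<^sub>m 1\<^sub>m 3"
  "disjoint_supports 3 4 qutrit_kraus"
  "\<forall>c<4. qutrit_kraus c \<noteq> 0\<^sub>m 3 3"
proof -
  have K: "\<forall>c<4. qutrit_family c \<in> carrier_mat 3 3" and e: "(1 / 3 :: complex) \<noteq> 0" by simp_all
  have scaled: "(1 / 3 * cnj (1 / 3 :: complex)) \<cdot>\<^sub>m (3 \<cdot>\<^sub>m 1\<^sub>m 3) = (1 / 3) \<cdot>\<^sub>m 1\<^sub>m 3"
    by (rule eq_matI) auto
  show "\<forall>c<4. qutrit_kraus c \<in> carrier_mat 3 3" by (simp add: qutrit_kraus_def)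
  show "lin_indep_mat_pairs 3 ({..<4} \<times> {..<4}) (prods_adj qutrit_kraus) (adj_prods qutrit_kraus)"
    using lin_indep_prods_smult(3)[OF K e pairs_indep_qutrit] by (simp add: qutrit_kraus_def[abs_def])
  show "sum_prods_adj 3 4 qutrit_kraus = (1 / 3) \<cdot>\<^sub>m 1\<^sub>m 3" "sum_adj_prods 3 4 qutrit_kraus = (1 / 3) \<cdot>\<^sub>m 1\<^sub>m 3"
    unfolding qutrit_kraus_def[abs_def] sum_prods_adj_smult[OF K] sum_prods_adj_qutrit scaled by simp_all
  show "disjoint_supports 3 4 qutrit_kraus"
    using disjoint_supports_smult[OF K disjoint_supports_qutrit] by (simp add: qutrit_kraus_def[abs_def])
  show "\<forall>c<4. qutrit_kraus c \<noteq> 0\<^sub>m 3 3"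
    using smult_nonzero_mat[OF _ qutrit_family_nonzero e] by (simp add: qutrit_kraus_def)
qed

lemma qudit_kraus_properties:
  assumes k: "3 \<le> k"
  shows "\<forall>t<k. qudit_kraus k t \<in> carrier_mat k k"
    "lin_indep_mats k ({..<k} \<times> {..<k}) (prods_adj (qudit_kraus k))"
    "lin_indep_mats k ({..<k} \<times> {..<k}) (adj_prods (qudit_kraus k))"
    "sum_prods_adj k k (qudit_kraus k) = (1 / of_nat k) \<cdot>\<^sub>m 1\<^sub>m k"
    "sum_adj_prods k k (qudit_kraus k) = (1 / of_nat k) \<cdot>\<^sub>m 1\<^sub>m k"
    "disjoint_supports k k (qudit_kraus k)"
    "\<forall>t<k. qudit_kraus k t \<noteq> 0\<^sub>m k k"
proof -
  have K: "\<forall>t<k. qudit_family k t \<in> carrier_mat k k" and e: "1 / of_nat k \<noteq> (0 :: complex)"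
    using k by simp_all
  have scaled: "(1 / (of_nat k * of_nat k)) \<cdot>\<^sub>m (of_nat k \<cdot>\<^sub>m 1\<^sub>m k) = (1 / of_nat k :: complex) \<cdot>\<^sub>m 1\<^sub>m k"
    using k by (intro eq_matI) auto
  show "\<forall>t<k. qudit_kraus k t \<in> carrier_mat k k" by (simp add: qudit_kraus_def)
  show "lin_indep_mats k ({..<k} \<times> {..<k}) (prods_adj (qudit_kraus k))"
    using lin_indep_prods_smult(1)[OF K e lin_indep_prods_qudit[OF k]] by (simp add: qudit_kraus_def[abs_def])
  show "lin_indep_mats k ({..<k} \<times> {..<k}) (adj_prods (qudit_kraus k))"
    using lin_indep_prods_smult(2)[OF K e lin_indep_adj_prods_qudit[OF k]] by (simp add: qudit_kraus_def[abs_def])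
  show "sum_prods_adj k k (qudit_kraus k) = (1 / of_nat k) \<cdot>\<^sub>m 1\<^sub>m k"
    "sum_adj_prods k k (qudit_kraus k) = (1 / of_nat k) \<cdot>\<^sub>m 1\<^sub>m k"
  proof -
    have "sum_prods_adj k k (qudit_family k) = of_nat k \<cdot>\<^sub>m 1\<^sub>m k"
      "sum_adj_prods k k (qudit_family k) = of_nat k \<cdot>\<^sub>m 1\<^sub>m k"
      using sum_prods_adj_qudit k by simp_all
    then show "sum_prods_adj k k (qudit_kraus k) = (1 / of_nat k) \<cdot>\<^sub>m 1\<^sub>m k"
      "sum_adj_prods k k (qudit_kraus k) = (1 / of_nat k) \<cdot>\<^sub>m 1\<^sub>m k"
      unfolding qudit_kraus_def[abs_def] sum_prods_adj_smult[OF K] by (simp_all add: scaled)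
  qed
  show "disjoint_supports k k (qudit_kraus k)"
    using disjoint_supports_smult[OF K disjoint_supports_qudit] by (simp add: qudit_kraus_def[abs_def])
  show "\<forall>t<k. qudit_kraus k t \<noteq> 0\<^sub>m k k"
    using smult_nonzero_mat[OF _ qudit_family_nonzero e] by (simp add: qudit_kraus_def)
qed

lemma mat_adjoint_smult_one: "cnj c = c \<Longrightarrow> mat_adjoint (c \<cdot>\<^sub>m 1\<^sub>m n) = c \<cdot>\<^sub>m 1\<^sub>m n"
  by (rule eq_matI) auto

lemma mat_adjoint_D1_mat: "mat_adjoint (D1_mat k) = D1_mat k"
proof -
  have "mat_adjoint sigma_mat = sigma_mat"
    by (rule eq_matI) (auto simp: sigma_mat_def less_2_cases_iff)
  then show ?thesis by (simp add: D1_mat_def mat_adjoint_kron mat_adjoint_smult_one)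
qed

lemma channel_kraus_properties:
  assumes k: "3 \<le> k"
  shows "\<forall>n<8 * k. channel_kraus k n \<in> carrier_mat (6 * k) (6 * k)"
    "lin_indep_mat_pairs (6 * k) ({..<8 * k} \<times> {..<8 * k}) (prods_adj (channel_kraus k)) (adj_prods (channel_kraus k))"
    "sum_prods_adj (6 * k) (8 * k) (channel_kraus k) = D1_mat k"
    "sum_adj_prods (6 * k) (8 * k) (channel_kraus k) = D1_mat k"
    "disjoint_supports (6 * k) (8 * k) (channel_kraus k)"
    "\<forall>n<8 * k. channel_kraus k n \<noteq> 0\<^sub>m (6 * k) (6 * k)"
proof -
  let ?A = "kron_family 4 qubit_kraus qutrit_kraus"
  note B = qubit_kraus_properties and C = qutrit_kraus_properties and L = qudit_kraus_properties[OF k]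
  have A: "\<forall>a<8. ?A a \<in> carrier_mat 6 6"
    using kron_family_carrier[OF B(1) C(1)] by simp
  have A_indep: "lin_indep_mat_pairs 6 ({..<8} \<times> {..<8}) (prods_adj ?A) (adj_prods ?A)"
    using kron_family_pairs_indep_right[OF B(1) C(1) B(2) B(3) C(2)] by simp
  have A_sums: "sum_prods_adj 6 8 ?A = kron sigma_mat ((1 / 3) \<cdot>\<^sub>m 1\<^sub>m 3)"
    "sum_adj_prods 6 8 ?A = kron sigma_mat ((1 / 3) \<cdot>\<^sub>m 1\<^sub>m 3)"
    using sum_prods_adj_kron_family[OF B(1) C(1)] B(4,5) C(3,4) by simp_all
  have A_supports: "disjoint_supports 6 8 ?A" "\<forall>a<8. ?A a \<noteq> 0\<^sub>m 6 6"
    using disjoint_supports_kron_family[OF B(1) C(1) B(6) C(5)] kron_family_nonzero[OF B(1) C(1) B(7) C(6)]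
    by simp_all
  show "\<forall>n<8 * k. channel_kraus k n \<in> carrier_mat (6 * k) (6 * k)"
    unfolding channel_kraus_def by (rule kron_family_carrier[OF A L(1)])
  show "lin_indep_mat_pairs (6 * k) ({..<8 * k} \<times> {..<8 * k}) (prods_adj (channel_kraus k)) (adj_prods (channel_kraus k))"
    unfolding channel_kraus_def by (rule kron_family_pairs_indep_left[OF A L(1) A_indep L(2) L(3)])
  show "sum_prods_adj (6 * k) (8 * k) (channel_kraus k) = D1_mat k"
    "sum_adj_prods (6 * k) (8 * k) (channel_kraus k) = D1_mat k"
    unfolding channel_kraus_def sum_prods_adj_kron_family[OF A L(1)] A_sums L(4) L(5)
    by (simp_all add: D1_mat_def)
  show "disjoint_supports (6 * k) (8 * k) (channel_kraus k)"
    unfolding channel_kraus_def by (rule disjoint_supports_kron_family[OF A L(1) A_supports(1) L(6)])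
  show "\<forall>n<8 * k. channel_kraus k n \<noteq> 0\<^sub>m (6 * k) (6 * k)"
    unfolding channel_kraus_def by (rule kron_family_nonzero[OF A L(1) A_supports(2) L(7)])
qed

theorem mainTheorem10:
  fixes k :: nat
  assumes "k \<ge> 3"
  shows "\<exists>\<Phi>. extreme_point_of \<Phi> (CP_set (6 * k) (6 * k) (D1_mat k) (D1_mat k)) \<and>
             choi_rank (6 * k) (6 * k) \<Phi> = 8 * k"
proof (intro exI conjI)
  note K = channel_kraus_properties[OF assms]
  have "kraus_map (6 * k) (8 * k) (channel_kraus k) \<in> CP_set (6 * k) (6 * k) (D1_mat k) (D1_mat k)"
    by (rule kraus_map_in_CP_set[OF K(1) K(3)]) (simp add: K(4) mat_adjoint_D1_mat)
  moreover have "\<forall>i<8 * k. hs_inner (6 * k) (channel_kraus k i) (channel_kraus k i) \<noteq> 0"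
    using K(1,6) by (simp add: hs_inner_self_nonzero)
  ultimately show "extreme_point_of (kraus_map (6 * k) (8 * k) (channel_kraus k))
      (CP_set (6 * k) (6 * k) (D1_mat k) (D1_mat k))"
    using kraus_map_extreme_point[OF K(1) hs_inner_disjoint_supports[OF K(5)] _ K(2)] by blast
  show "choi_rank (6 * k) (6 * k) (kraus_map (6 * k) (8 * k) (channel_kraus k)) = 8 * k"
    by (rule choi_rank_kraus_map[OF K(1) K(5) K(6)])
qed

end
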